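(* <ul> <li>If $n=3$: $\Gamma^1=\Gamma^2=\mathrm{Q}=\mathrm{P}=\mathrm{A}$.</li> <li>If $n=4$: $\Gamma^1=\Gamma^3=\mathrm{Q}$ and $\Gamma^2=\mathrm{Q}'=\mathrm{P}$, and $\mathrm{Q}\neq\mathrm{P}$.</li> <li>If $n=5$: $\Gamma^1=\Gamma^2=\Gamma^3=\Gamma^4=\mathrm{Q}$.</li> </ul>
   Context: Let $\mathrm{C}$ be either the real Clifford algebra $C\ell_{p,q}$ with $p+q=n$, or the complex Clifford algebra $C\ell(\mathbb{C}^n)$. It has identity $e$ and generators $e_1,\dots,e_n$ satisfying $e_ae_b+e_be_a=2\eta_{ab}e$. In the real case $\eta=\mathrm{diag}(1,\dots,1,-1,\dots,-1)$ with $p$ entries $+1$ and $q$ entries $-1$. In the complex case $\eta=I_n$. $\mathrm{C}^k$ is the grade-$k$ subspace, spanned by the products $e_{a_1}\cdots e_{a_k}$ with $a_1<\dots<a_k$. The even subspace is $\mathrm{C}^{(0)}=\bigoplus_{k\text{ even}}\mathrm{C}^k$ and the odd subspace is $\mathrm{C}^{(1)}=\bigoplus_{k\text{ odd}}\mathrm{C}^k$. The reversion $U\mapsto\tilde U$ is the linear anti-automorphism acting on $\mathrm{C}^k$ as $(-1)^{k(k-1)/2}$. For $S\subseteq\mathrm{C}$, $S^\times$ is the set of elements of $S$ invertible in $\mathrm{C}$, and $\mathrm{C}^{\times(j)}:=(\mathrm{C}^{(j)})^\times$. $\mathrm{Z}$ is the center: $\mathrm{Z}=\mathrm{C}^0$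 for $n$ even and $\mathrm{Z}=\mathrm{C}^0\oplus\mathrm{C}^n$ for $n$ odd. Define: <ul> <li>$\Gamma^k=\{T\in\mathrm{C}^\times: T\,\mathrm{C}^k\,T^{-1}\subseteq\mathrm{C}^k\}$;</li> <li>$\mathrm{P}:=\mathrm{Z}^\times(\mathrm{C}^{\times(0)}\cup\mathrm{C}^{\times(1)})=\{WT: W\in\mathrm{Z}^\times, T\in\mathrm{C}^{\times(0)}\cup\mathrm{C}^{\times(1)}\}$;</li> <li>$\mathrm{A}:=\{T\in\mathrm{C}^\times:\tilde TT\in\mathrm{Z}^\times\}$;</li> <li>$\mathrm{Q}:=\{T\in\mathrm{P}:\tilde TT\in\mathrm{Z}^\times\}$;</li> <li>$\mathrm{Q}':=\{T\in\mathrm{P}:\tilde TT\in(\mathrm{C}^0\oplus\mathrm{C}^n)^\times\}$.</li> </ul> *)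

theory Defs
  imports Complex_Main
begin

text \<open>Clifford algebra with generators e_0,...,e_(n-1) over a field 'a with diagonal
metric eta (e_a e_a = eta a).  Elements are coefficient functions on the basis
blades e_A (A a subset of {..<n}, e_A = ordered product of e_a, a in A, in increasing order).\<close>

type_synonym 'a mv = "nat set \<Rightarrow> 'a"

definition clif :: "nat \<Rightarrow> 'a::field mv set" where
  "clif n = {U. \<forall>A. \<not> A \<subseteq> {..<n} \<longrightarrow> U A = 0}"

definition blade_sign :: "nat set \<Rightarrow> nat set \<Rightarrow> 'a::field" where
  "blade_sign A B = (-1) ^ card {(a, b). a \<in> A \<and> b \<in> B \<and> b < a}"

definition cl_mult :: "nat \<Rightarrow> (nat \<Rightarrow> 'a::field) \<Rightarrow> 'a mv \<Rightarrow> 'a mv \<Rightarrow> 'a mv" where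
  "cl_mult n eta U V = (\<lambda>C. \<Sum>A\<in>Pow {..<n}. \<Sum>B\<in>Pow {..<n}.
      if (A - B) \<union> (B - A) = C
      then blade_sign A B * (\<Prod>i\<in>A \<inter> B. eta i) * U A * V B else 0)"

definition cl_one :: "'a::field mv" where
  "cl_one = (\<lambda>A. if A = {} then 1 else 0)"

definition cl_gen :: "nat \<Rightarrow> 'a::field mv" where
  "cl_gen a = (\<lambda>A. if A = {a} then 1 else 0)"

definition grades :: "nat \<Rightarrow> nat set \<Rightarrow> 'a::field mv set" where
  "grades n K = {U \<in> clif n. \<forall>A. card A \<notin> K \<longrightarrow> U A = 0}"

definition grade :: "nat \<Rightarrow> nat \<Rightarrow> 'a::field mv set" where
  "grade n k = grades n {k}"

definition even_part :: "nat \<Rightarrow> 'a::field mv set" where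
  "even_part n = grades n {k. even k}"

definition odd_part :: "nat \<Rightarrow> 'a::field mv set" where
  "odd_part n = grades n {k. odd k}"

definition cl_rev :: "'a::field mv \<Rightarrow> 'a mv" where
  "cl_rev U = (\<lambda>A. (-1) ^ (card A * (card A - 1) div 2) * U A)"

definition cl_invertible :: "nat \<Rightarrow> (nat \<Rightarrow> 'a::field) \<Rightarrow> 'a mv \<Rightarrow> bool" where
  "cl_invertible n eta T \<longleftrightarrow> T \<in> clif n \<and>
     (\<exists>V\<in>clif n. cl_mult n eta T V = cl_one \<and> cl_mult n eta V T = cl_one)"

definition cl_inv :: "nat \<Rightarrow> (nat \<Rightarrow> 'a::field) \<Rightarrow> 'a mv \<Rightarrow> 'a mv" where
  "cl_inv n eta T = (THE V. V \<in> clif n \<and> cl_mult n eta T V = cl_one \<and> cl_mult n eta V T = cl_one)"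

definition units_in :: "nat \<Rightarrow> (nat \<Rightarrow> 'a::field) \<Rightarrow> 'a mv set \<Rightarrow> 'a mv set" where
  "units_in n eta S = {T \<in> S. cl_invertible n eta T}"

definition center :: "nat \<Rightarrow> 'a::field mv set" where
  "center n = (if even n then grades n {0} else grades n {0, n})"

definition Gamma :: "nat \<Rightarrow> (nat \<Rightarrow> 'a::field) \<Rightarrow> nat \<Rightarrow> 'a mv set" where
  "Gamma n eta k = {T. cl_invertible n eta T \<and>
     (\<forall>X \<in> grade n k. cl_mult n eta (cl_mult n eta T X) (cl_inv n eta T) \<in> grade n k)}"

definition Pset :: "nat \<Rightarrow> (nat \<Rightarrow> 'a::field) \<Rightarrow> 'a mv set" where
  "Pset n eta = {cl_mult n eta W T | W T. W \<in> units_in n eta (center n) \<and>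
      T \<in> units_in n eta (even_part n) \<union> units_in n eta (odd_part n)}"

definition Aset :: "nat \<Rightarrow> (nat \<Rightarrow> 'a::field) \<Rightarrow> 'a mv set" where
  "Aset n eta = {T. cl_invertible n eta T \<and>
      cl_mult n eta (cl_rev T) T \<in> units_in n eta (center n)}"

definition Qset :: "nat \<Rightarrow> (nat \<Rightarrow> 'a::field) \<Rightarrow> 'a mv set" where
  "Qset n eta = {T \<in> Pset n eta. cl_mult n eta (cl_rev T) T \<in> units_in n eta (center n)}"

definition Qset' :: "nat \<Rightarrow> (nat \<Rightarrow> 'a::field) \<Rightarrow> 'a mv set" where
  "Qset' n eta = {T \<in> Pset n eta. cl_mult n eta (cl_rev T) T \<in> units_in n eta (grades n {0, n})}"

text \<open>Signature (p,q): eta i = 1 for i < p, -1 otherwise (generators indexed from 0).\<close>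
definition real_sig :: "nat \<Rightarrow> nat \<Rightarrow> real" where
  "real_sig p i = (if i < p then 1 else -1)"

definition low_dim_claims :: "nat \<Rightarrow> (nat \<Rightarrow> 'a::field) \<Rightarrow> bool" where
  "low_dim_claims n eta \<longleftrightarrow>
    (n = 3 \<longrightarrow> Gamma n eta 1 = Gamma n eta 2 \<and> Gamma n eta 2 = Qset n eta
               \<and> Qset n eta = Pset n eta \<and> Pset n eta = Aset n eta) \<and>
    (n = 4 \<longrightarrow> Gamma n eta 1 = Gamma n eta 3 \<and> Gamma n eta 3 = Qset n eta
               \<and> Gamma n eta 2 = Qset' n eta \<and> Qset' n eta = Pset n eta
               \<and> Qset n eta \<noteq> Pset n eta) \<and>
    (n = 5 \<longrightarrow> Gamma n eta 1 = Gamma n eta 2 \<and> Gamma n eta 2 = Gamma n eta 3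
               \<and> Gamma n eta 3 = Gamma n eta 4 \<and> Gamma n eta 4 = Qset n eta)"

end

theory Submission
  imports Defs "HOL-Library.Function_Algebras"
begin

text \<open>
  If \<open>T\<close> conjugates \<open>C\<^sup>k\<close> into itself for some \<open>0 < k < n\<close>, write \<open>T X = Y T\<close> with \<open>X, Y\<close> of
  grade \<open>k\<close>; applying the reversion and the grade involution shows that both \<open>T\<^sup>~ T\<close> and
  \<open>T\<^sup>-\<^sup>1 T\<^sub>0\<close>, where \<open>T\<^sub>0\<close> is the even part of \<open>T\<close>, commute with all of \<open>C\<^sup>k\<close>. An element commuting
  with every grade-\<open>k\<close> blade has only scalar and pseudoscalar parts, and only a scalar part when
  \<open>(n + 1) k\<close> is odd. Hence \<open>T\<^sup>~ T\<close> is central whenever \<open>n\<close> or \<open>(n + 1) k\<close> is odd, and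
  \<open>T\<^sub>0 = T (a + b I)\<close>, which forces \<open>T\<close> to be even or odd up to a central factor.

  Conversely, conjugation by an element of \<open>Q\<close> preserves the reversion sign, the parity, the
  scalar part and, for odd \<open>n\<close>, the pseudoscalar part, and for \<open>n \<le> 5\<close> these invariants separate
  each grade from the others. For an even or odd \<open>x\<close> the product \<open>x\<^sup>~ x\<close> only has grades
  divisible by 4, which gives \<open>P \<subseteq> A\<close> for \<open>n = 3\<close> and \<open>P = Q'\<close> for \<open>n = 4\<close>; there \<open>1 + 2 I\<close> is an
  even element of \<open>P\<close> outside \<open>Q\<close>.
\<close>


section \<open>Signs of blade products\<close>

lemma sym_diff_cancel [simp]:
  "sym_diff A (sym_diff A C) = C" "sym_diff (sym_diff A C) A = C"
  "sym_diff (sym_diff C A) A = C" "sym_diff A (sym_diff C A) = C"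
  by blast+

lemma sym_diff_commute: "sym_diff A B = sym_diff B A"
  by blast

lemma card_sym_diff_add:
  assumes "finite X" "finite Y"
  shows "card (sym_diff X Y) + 2 * card (X \<inter> Y) = card X + card Y"
proof -
  have "card (sym_diff X Y) = card (X - Y) + card (Y - X)"
    using assms by (intro card_Un_disjoint) auto
  moreover have "card X = card (X - Y) + card (X \<inter> Y)"
    using card_Int_Diff[of X Y] assms by simp
  moreover have "card Y = card (Y - X) + card (X \<inter> Y)"
    using card_Int_Diff[of Y X] assms by (simp add: Int_commute)
  ultimately show ?thesis by simp
qed

lemma neg_one_power_card_sym_diff:
  assumes "finite X" "finite Y"
  shows "(-1::'a::comm_ring_1) ^ card (sym_diff X Y) = (-1) ^ card X * (-1) ^ card Y"
proof -
  have "(-1::'a) ^ card X * (-1) ^ card Y = (-1) ^ (card (sym_diff X Y) + 2 * card (X \<inter> Y))"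
    using card_sym_diff_add[OF assms] by (simp add: power_add)
  then show ?thesis by (simp add: power_add power_mult)
qed

lemma subset_lessThan_card_eq: "A \<subseteq> {..<n} \<Longrightarrow> card A = n \<Longrightarrow> A = {..<n}"
  using card_subset_eq[of "{..<n}" A] by simp

lemma card_subset_lessThan:
  assumes "A \<subseteq> {..<n}"
  shows "card A \<le> n" "card A = 0 \<Longrightarrow> A = {}" "card A = n \<Longrightarrow> A = {..<n}"
  using assms card_mono[of "{..<n}" A] finite_subset[OF assms] subset_lessThan_card_eq[OF assms]
  by auto

definition inversions :: "nat set \<Rightarrow> nat set \<Rightarrow> (nat \<times> nat) set" where
  "inversions A B = {(a, b). a \<in> A \<and> b \<in> B \<and> b < a}"

lemma blade_sign_inversions: "blade_sign A B = (-1) ^ card (inversions A B)"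
  unfolding blade_sign_def inversions_def ..

lemma finite_inversions: "finite A \<Longrightarrow> finite B \<Longrightarrow> finite (inversions A B)"
  unfolding inversions_def by (rule finite_subset[of _ "A \<times> B"]) auto

lemma inversions_sym_diff_left:
  "inversions (sym_diff A B) C = sym_diff (inversions A C) (inversions B C)"
  unfolding inversions_def by auto

lemma inversions_sym_diff_right:
  "inversions A (sym_diff B C) = sym_diff (inversions A B) (inversions A C)"
  unfolding inversions_def by auto

lemma card_inversions_swap:
  assumes "finite A" "finite B"
  shows "card (inversions A B) + card (inversions B A) + card (A \<inter> B) = card A * card B"
proof -
  let ?swap = "\<lambda>(x, y). (y, x)" and ?diag = "\<lambda>x. (x, x)"
  have split: "A \<times> B = (inversions A B \<union> ?swap ` inversions B A) \<union> ?diag ` (A \<inter> B)"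
    unfolding inversions_def by (auto simp: image_iff dest: linorder_neqE_nat)
  have fin: "finite (inversions A B)" "finite (inversions B A)"
    using assms by (simp_all add: finite_inversions)
  have "card (A \<times> B) = card (inversions A B \<union> ?swap ` inversions B A) + card (?diag ` (A \<inter> B))"
    unfolding split by (rule card_Un_disjoint) (use fin assms in \<open>auto simp: inversions_def\<close>)
  also have "card (inversions A B \<union> ?swap ` inversions B A)
      = card (inversions A B) + card (?swap ` inversions B A)"
    by (rule card_Un_disjoint) (use fin in \<open>auto simp: inversions_def\<close>)
  also have "card (?swap ` inversions B A) = card (inversions B A)"
    by (rule card_image) (auto simp: inj_on_def)
  also have "card (?diag ` (A \<inter> B)) = card (A \<inter> B)"
    by (rule card_image) (auto simp: inj_on_def)
  finally show ?thesis by (simp add: card_cartesian_product)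
qed

lemma blade_sign_sym_diff_left:
  assumes "finite A" "finite B" "finite C"
  shows "blade_sign (sym_diff A B) C = (blade_sign A C * blade_sign B C :: 'a::field)"
  unfolding blade_sign_inversions inversions_sym_diff_left
  by (intro neg_one_power_card_sym_diff finite_inversions assms)

lemma blade_sign_sym_diff_right:
  assumes "finite A" "finite B" "finite C"
  shows "blade_sign A (sym_diff B C) = (blade_sign A B * blade_sign A C :: 'a::field)"
  unfolding blade_sign_inversions inversions_sym_diff_right
  by (intro neg_one_power_card_sym_diff finite_inversions assms)

lemma blade_sign_square [simp]: "blade_sign A B * blade_sign A B = (1::'a::field)"
  unfolding blade_sign_inversions by (simp flip: power_add add: mult_2[symmetric] power_mult)

lemma blade_sign_nonzero: "blade_sign A B \<noteq> (0::'a::field)"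
  unfolding blade_sign_inversions by simp

lemma blade_sign_swap:
  assumes "finite A" "finite B"
  shows "blade_sign B A = (-1) ^ (card A * card B + card (A \<inter> B)) * (blade_sign A B :: 'a::field)"
proof -
  have "card A * card B + card (A \<inter> B) + card (inversions A B)
      = card (inversions B A) + 2 * (card (inversions A B) + card (A \<inter> B))"
    using card_inversions_swap[OF assms] by simp
  then have "(-1::'a) ^ (card A * card B + card (A \<inter> B)) * (-1) ^ card (inversions A B)
      = (-1) ^ card (inversions B A)"
    by (metis (no_types) power_add power_mult neg_one_even_power even_mult_iff even_numeral mult_1_right)
  then show ?thesis unfolding blade_sign_inversions by simp
qed

definition rev_sign :: "nat \<Rightarrow> 'a::field" where
  "rev_sign k = (-1) ^ (k * (k - 1) div 2)"

lemma blade_sign_self: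
  assumes "finite X"
  shows "blade_sign X X = rev_sign (card X)"
proof -
  have "2 * card (inversions X X) + card X = card X * card X"
    using card_inversions_swap[OF assms assms] by simp
  then have "card (inversions X X) = card X * (card X - 1) div 2"
    by (simp add: diff_mult_distrib2)
  then show ?thesis unfolding blade_sign_inversions rev_sign_def by simp
qed

lemma rev_sign_square [simp]: "rev_sign k * rev_sign k = (1::'a::field)"
  unfolding rev_sign_def by (simp flip: power_add add: mult_2[symmetric] power_mult)

lemma rev_sign_nonzero: "rev_sign k \<noteq> (0::'a::field)"
  unfolding rev_sign_def by simp

lemma rev_sign_values: "rev_sign 0 = (1::'a::field)" "rev_sign 1 = (1::'a)" "rev_sign 2 = (-1::'a)"
  "rev_sign 3 = (-1::'a)" "rev_sign 4 = (1::'a)" "rev_sign 5 = (1::'a)" "rev_sign (Suc 0) = (1::'a)"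
  unfolding rev_sign_def by simp_all

lemma neg_one_power_eq_one_iff: "(-1::'a::field_char_0) ^ k = 1 \<longleftrightarrow> even k"
  by (cases "even k") simp_all

lemma four_dvd_if_rev_sign_eq_one:
  assumes "even j" "rev_sign j = (1::'a::field_char_0)"
  shows "4 dvd j"
proof -
  obtain m where j: "j = 2 * m" using assms(1) by blast
  have "j * (j - 1) div 2 = m * (2 * m - 1)" unfolding j by (simp add: mult.assoc)
  then have "even (m * (2 * m - 1))"
    using assms(2) unfolding rev_sign_def by (simp add: neg_one_power_eq_one_iff)
  then have "even m" by (cases m) auto
  then show ?thesis unfolding j by auto
qed

section \<open>The Clifford product\<close>

definition blade_factor :: "(nat \<Rightarrow> 'a::field) \<Rightarrow> nat set \<Rightarrow> nat set \<Rightarrow> 'a" where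
  "blade_factor eta A B = blade_sign A B * (\<Prod>i\<in>A \<inter> B. eta i)"

lemma blade_factor_swap:
  assumes "finite A" "finite B"
  shows "blade_factor eta B A = (-1) ^ (card A * card B + card (A \<inter> B)) * blade_factor eta A B"
  unfolding blade_factor_def blade_sign_swap[OF assms] by (simp add: Int_commute ac_simps)

lemma rev_sign_blade_factor:
  assumes "finite A" "finite B"
  shows "rev_sign (card (sym_diff A B)) * blade_factor eta A B
       = blade_factor eta B A * rev_sign (card A) * rev_sign (card B)"
proof -
  have "finite (sym_diff A B)" using assms by auto
  then have "rev_sign (card (sym_diff A B)) = (blade_sign (sym_diff A B) (sym_diff A B) :: 'a)"
    by (simp add: blade_sign_self)
  also have "\<dots> = blade_sign A A * blade_sign A B * (blade_sign B A * blade_sign B B)"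
    using assms \<open>finite (sym_diff A B)\<close>
    by (simp add: blade_sign_sym_diff_left blade_sign_sym_diff_right)
  finally show ?thesis
    using blade_sign_square[of A B, where 'a='a]
    unfolding blade_factor_def blade_sign_self[OF assms(1)] blade_sign_self[OF assms(2)]
    by (simp add: ac_simps Int_commute)
qed

lemma cl_mult_eq:
  "cl_mult n eta U V C = (if C \<subseteq> {..<n} then
      (\<Sum>A\<in>Pow {..<n}. blade_factor eta A (sym_diff A C) * U A * V (sym_diff A C)) else 0)"
proof -
  have inner: "(\<Sum>B\<in>Pow {..<n}. if sym_diff A B = C
        then blade_sign A B * (\<Prod>i\<in>A \<inter> B. eta i) * U A * V B else 0)
      = (if C \<subseteq> {..<n} then blade_factor eta A (sym_diff A C) * U A * V (sym_diff A C) else 0)"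
    if "A \<subseteq> {..<n}" for A
  proof -
    have "sym_diff A B = C \<longleftrightarrow> B = sym_diff A C" for B by blast
    moreover have "sym_diff A C \<subseteq> {..<n} \<longleftrightarrow> C \<subseteq> {..<n}" using that by blast
    ultimately show ?thesis by (simp add: blade_factor_def)
  qed
  show ?thesis unfolding cl_mult_def by (simp add: inner)
qed

lemma sum_Pow_sym_diff_reindex:
  assumes "A \<subseteq> S"
  shows "(\<Sum>C\<in>Pow S. f C) = (\<Sum>B\<in>Pow S. f (sym_diff A B))"
  by (rule sum.reindex_bij_witness[where i="sym_diff A" and j="sym_diff A"]) (use assms in auto)

lemma blade_factor_cocycle:
  assumes "finite A" "finite B" "finite C"
  shows "blade_factor eta A B * blade_factor eta (sym_diff A B) C
       = blade_factor eta B C * blade_factor eta A (sym_diff B C)"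
proof -
  let ?M = "(A \<inter> B) \<union> (sym_diff A B \<inter> C)"
  have "(\<Prod>i\<in>A \<inter> B. eta i) * (\<Prod>i\<in>sym_diff A B \<inter> C. eta i) = (\<Prod>i\<in>?M. eta i)"
    by (rule prod.union_disjoint[symmetric]) (use assms in auto)
  moreover have "?M = (B \<inter> C) \<union> (A \<inter> sym_diff B C)" by blast
  moreover have "(\<Prod>i\<in>B \<inter> C. eta i) * (\<Prod>i\<in>A \<inter> sym_diff B C. eta i)
      = (\<Prod>i\<in>(B \<inter> C) \<union> (A \<inter> sym_diff B C). eta i)"
    by (rule prod.union_disjoint[symmetric]) (use assms in auto)
  ultimately show ?thesis
    unfolding blade_factor_def blade_sign_sym_diff_left[OF assms] blade_sign_sym_diff_right[OF assms]
    by (simp add: ac_simps)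
qed

lemma blade_factor_assoc:
  assumes "finite A" "finite B" "finite D"
  shows "blade_factor eta (sym_diff A B) (sym_diff (sym_diff A B) D) * blade_factor eta A B
       = blade_factor eta A (sym_diff A D) * blade_factor eta B (sym_diff B (sym_diff A D))"
proof -
  let ?C = "sym_diff (sym_diff A B) D"
  have "finite ?C" using assms by auto
  then have "blade_factor eta A B * blade_factor eta (sym_diff A B) ?C
      = blade_factor eta B ?C * blade_factor eta A (sym_diff B ?C)"
    by (rule blade_factor_cocycle[OF assms(1,2)])
  moreover have "sym_diff B ?C = sym_diff A D" "sym_diff B (sym_diff A D) = ?C" by blast+
  ultimately show ?thesis by (simp add: ac_simps)
qed

lemma cl_mult_assoc: "cl_mult n eta (cl_mult n eta U V) W = cl_mult n eta U (cl_mult n eta V W)"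
proof (rule ext)
  fix D
  let ?P = "Pow {..<n}" and ?f = "blade_factor eta"
  show "cl_mult n eta (cl_mult n eta U V) W D = cl_mult n eta U (cl_mult n eta V W) D"
  proof (cases "D \<subseteq> {..<n}")
    case D: True
    have fin: "X \<in> ?P \<Longrightarrow> finite X" for X by (auto intro: finite_subset)
    have "cl_mult n eta (cl_mult n eta U V) W D
        = (\<Sum>C\<in>?P. ?f C (sym_diff C D) * (\<Sum>A\<in>?P. ?f A (sym_diff A C) * U A * V (sym_diff A C)) * W (sym_diff C D))"
      using D by (simp add: cl_mult_eq)
    also have "\<dots> = (\<Sum>C\<in>?P. \<Sum>A\<in>?P. ?f C (sym_diff C D) * ?f A (sym_diff A C) * U A * V (sym_diff A C) * W (sym_diff C D))"
      by (simp add: sum_distrib_left sum_distrib_right ac_simps)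
    also have "\<dots> = (\<Sum>A\<in>?P. \<Sum>C\<in>?P. ?f C (sym_diff C D) * ?f A (sym_diff A C) * U A * V (sym_diff A C) * W (sym_diff C D))"
      by (rule sum.swap)
    also have "\<dots> = (\<Sum>A\<in>?P. \<Sum>B\<in>?P. ?f (sym_diff A B) (sym_diff (sym_diff A B) D) * ?f A B * U A * V B * W (sym_diff (sym_diff A B) D))"
    proof (rule sum.cong[OF refl])
      fix A assume "A \<in> ?P"
      then have "A \<subseteq> {..<n}" by simp
      from sum_Pow_sym_diff_reindex[OF this,
          of "\<lambda>C. ?f C (sym_diff C D) * ?f A (sym_diff A C) * U A * V (sym_diff A C) * W (sym_diff C D)"]
      show "(\<Sum>C\<in>?P. ?f C (sym_diff C D) * ?f A (sym_diff A C) * U A * V (sym_diff A C) * W (sym_diff C D))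
          = (\<Sum>B\<in>?P. ?f (sym_diff A B) (sym_diff (sym_diff A B) D) * ?f A B * U A * V B * W (sym_diff (sym_diff A B) D))"
        by (simp only: sym_diff_cancel)
    qed
    also have "\<dots> = (\<Sum>A\<in>?P. \<Sum>B\<in>?P. ?f A (sym_diff A D) * U A * (?f B (sym_diff B (sym_diff A D)) * V B * W (sym_diff B (sym_diff A D))))"
    proof (intro sum.cong refl)
      fix A B assume "A \<in> ?P" "B \<in> ?P"
      moreover have "sym_diff B (sym_diff A D) = sym_diff (sym_diff A B) D" by blast
      ultimately show "?f (sym_diff A B) (sym_diff (sym_diff A B) D) * ?f A B * U A * V B * W (sym_diff (sym_diff A B) D)
          = ?f A (sym_diff A D) * U A * (?f B (sym_diff B (sym_diff A D)) * V B * W (sym_diff B (sym_diff A D)))"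
        using blade_factor_assoc[OF fin fin finite_subset[OF D], of A B eta] by (simp add: ac_simps)
    qed
    also have "\<dots> = (\<Sum>A\<in>?P. ?f A (sym_diff A D) * U A * (\<Sum>B\<in>?P. ?f B (sym_diff B (sym_diff A D)) * V B * W (sym_diff B (sym_diff A D))))"
      by (simp add: sum_distrib_left)
    also have "\<dots> = cl_mult n eta U (cl_mult n eta V W) D"
    proof -
      have "A \<subseteq> {..<n} \<Longrightarrow> sym_diff A D \<subseteq> {..<n}" for A using D by blast
      then show ?thesis using D by (simp add: cl_mult_eq[of n eta U] cl_mult_eq[of n eta V W])
    qed
    finally show ?thesis .
  qed (simp add: cl_mult_eq)
qed

definition blade :: "nat set \<Rightarrow> 'a::field mv" where
  "blade A = (\<lambda>C. if C = A then 1 else 0)"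

definition scale :: "'a::field \<Rightarrow> 'a mv \<Rightarrow> 'a mv" where
  "scale a U = (\<lambda>A. a * U A)"

definition involute :: "'a::field mv \<Rightarrow> 'a mv" where
  "involute U = (\<lambda>A. (-1) ^ card A * U A)"

lemma cl_one_eq_blade: "cl_one = blade {}"
  unfolding cl_one_def blade_def by auto

lemma cl_rev_eq: "cl_rev U A = rev_sign (card A) * U A"
  unfolding cl_rev_def rev_sign_def ..

lemma scale_one [simp]: "scale 1 U = U"
  unfolding scale_def by simp

lemma scale_zero [simp]: "scale 0 U = 0" "scale a 0 = 0"
  unfolding scale_def by auto

lemma scale_cancel: "a \<noteq> 0 \<Longrightarrow> scale a U = scale a V \<Longrightarrow> U = V"
  unfolding scale_def by (rule ext) (metis mult_left_cancel)

lemma cl_rev_minus: "cl_rev (- U) = - cl_rev U"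
  unfolding cl_rev_def by auto

lemma cl_rev_cl_rev [simp]: "cl_rev (cl_rev U) = U"
  unfolding cl_rev_eq[abs_def] by (simp add: mult.assoc[symmetric])

lemma cl_rev_one [simp]: "cl_rev cl_one = cl_one"
  unfolding cl_rev_def cl_one_def by auto

lemma involute_add: "involute (U + V) = involute U + involute V"
  unfolding involute_def by (rule ext) (simp add: algebra_simps)

lemma involute_scale: "involute (scale a U) = scale a (involute U)"
  unfolding involute_def scale_def by (simp add: algebra_simps)

lemma involute_involute [simp]: "involute (involute U) = U"
  unfolding involute_def by (simp flip: power_add add: mult_2[symmetric] power_mult mult.assoc[symmetric])

lemma involute_one [simp]: "involute cl_one = cl_one"
  unfolding involute_def cl_one_def by auto

lemma involute_cl_rev: "involute (cl_rev U) = cl_rev (involute U)"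
  unfolding involute_def cl_rev_def by (simp add: algebra_simps)

locale clifford =
  fixes n :: nat and eta :: "nat \<Rightarrow> 'a::field_char_0"
  assumes eta_sign: "eta i = 1 \<or> eta i = -1"
begin

abbreviation mult :: "'a mv \<Rightarrow> 'a mv \<Rightarrow> 'a mv" (infixl "\<odot>" 70) where
  "U \<odot> V \<equiv> cl_mult n eta U V"

lemma prod_eta_square: "(\<Prod>i\<in>S. eta i) * (\<Prod>i\<in>S. eta i) = 1"
proof -
  have "eta i * eta i = 1" for i using eta_sign[of i] by auto
  then show ?thesis by (simp add: prod.distrib[symmetric])
qed

lemma blade_factor_nonzero: "blade_factor eta A B \<noteq> 0"
  unfolding blade_factor_def using prod_eta_square blade_sign_nonzero
  by (metis mult_eq_0_iff zero_neq_one)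

lemma cl_mult_clif: "U \<odot> V \<in> clif n"
  unfolding clif_def by (simp add: cl_mult_eq)

lemma clif_outside: "U \<in> clif n \<Longrightarrow> \<not> A \<subseteq> {..<n} \<Longrightarrow> U A = 0"
  unfolding clif_def by auto

lemma clif_eqI:
  assumes "U \<in> clif n" "V \<in> clif n" "\<And>A. A \<subseteq> {..<n} \<Longrightarrow> U A = V A"
  shows "U = V"
proof
  fix A show "U A = V A"
    using assms clif_outside[of U A] clif_outside[of V A] by (cases "A \<subseteq> {..<n}") auto
qed

lemma cl_one_clif: "cl_one \<in> clif n"
  unfolding clif_def cl_one_def by auto

lemma blade_clif: "B \<subseteq> {..<n} \<Longrightarrow> blade B \<in> clif n"
  unfolding clif_def blade_def by auto

lemma add_clif: "U \<in> clif n \<Longrightarrow> V \<in> clif n \<Longrightarrow> U + V \<in> clif n"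
  unfolding clif_def by auto

lemma diff_clif: "U \<in> clif n \<Longrightarrow> V \<in> clif n \<Longrightarrow> U - V \<in> clif n"
  unfolding clif_def by auto

lemma minus_clif: "U \<in> clif n \<Longrightarrow> - U \<in> clif n"
  unfolding clif_def by auto

lemma scale_clif: "U \<in> clif n \<Longrightarrow> scale a U \<in> clif n"
  unfolding clif_def scale_def by auto

lemma involute_clif: "U \<in> clif n \<Longrightarrow> involute U \<in> clif n"
  unfolding clif_def involute_def by auto

lemma cl_rev_clif: "U \<in> clif n \<Longrightarrow> cl_rev U \<in> clif n"
  unfolding clif_def cl_rev_def by auto

lemma cl_mult_blade_right:
  assumes "B \<subseteq> {..<n}"
  shows "(U \<odot> blade B) C = (if C \<subseteq> {..<n} then blade_factor eta (sym_diff B C) B * U (sym_diff B C) else 0)"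
proof (cases "C \<subseteq> {..<n}")
  case True
  have "(U \<odot> blade B) C = (\<Sum>A\<in>Pow {..<n}. blade_factor eta A (sym_diff A C) * U A * blade B (sym_diff A C))"
    using True by (simp add: cl_mult_eq)
  also have "\<dots> = (\<Sum>A\<in>Pow {..<n}. if A = sym_diff B C then blade_factor eta A (sym_diff A C) * U A else 0)"
  proof (rule sum.cong[OF refl])
    fix A
    have "sym_diff A C = B \<longleftrightarrow> A = sym_diff B C" by blast
    then show "blade_factor eta A (sym_diff A C) * U A * blade B (sym_diff A C)
        = (if A = sym_diff B C then blade_factor eta A (sym_diff A C) * U A else 0)"
      unfolding blade_def by simp
  qed
  also have "\<dots> = blade_factor eta (sym_diff B C) B * U (sym_diff B C)"
    using True assms by (subst sum.delta) auto
  finally show ?thesis using True by simp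
qed (simp add: cl_mult_eq)

lemma cl_mult_blade_left:
  assumes "B \<subseteq> {..<n}"
  shows "(blade B \<odot> U) C = (if C \<subseteq> {..<n} then blade_factor eta B (sym_diff B C) * U (sym_diff B C) else 0)"
proof (cases "C \<subseteq> {..<n}")
  case True
  have "(blade B \<odot> U) C = (\<Sum>A\<in>Pow {..<n}. blade_factor eta A (sym_diff A C) * blade B A * U (sym_diff A C))"
    using True by (simp add: cl_mult_eq)
  also have "\<dots> = (\<Sum>A\<in>Pow {..<n}. if A = B then blade_factor eta A (sym_diff A C) * U (sym_diff A C) else 0)"
    by (rule sum.cong[OF refl]) (simp add: blade_def)
  also have "\<dots> = blade_factor eta B (sym_diff B C) * U (sym_diff B C)"
    using assms by (subst sum.delta) auto
  finally show ?thesis using True by simp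
qed (simp add: cl_mult_eq)

lemma cl_mult_one_left: "U \<in> clif n \<Longrightarrow> cl_one \<odot> U = U"
  unfolding cl_one_eq_blade
  by (rule clif_eqI) (simp_all add: cl_mult_clif cl_mult_blade_left blade_factor_def blade_sign_def)

lemma cl_mult_one_right: "U \<in> clif n \<Longrightarrow> U \<odot> cl_one = U"
  unfolding cl_one_eq_blade
  by (rule clif_eqI) (simp_all add: cl_mult_clif cl_mult_blade_right blade_factor_def blade_sign_def)

lemma cl_mult_add_left: "(U + V) \<odot> W = U \<odot> W + V \<odot> W"
  by (rule ext) (simp add: cl_mult_eq sum.distrib[symmetric] algebra_simps)

lemma cl_mult_add_right: "W \<odot> (U + V) = W \<odot> U + W \<odot> V"
  by (rule ext) (simp add: cl_mult_eq sum.distrib[symmetric] algebra_simps)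

lemma cl_mult_diff_left: "(U - V) \<odot> W = U \<odot> W - V \<odot> W"
  using cl_mult_add_left[of "U - V" V W] by (simp add: eq_diff_eq)

lemma cl_mult_diff_right: "W \<odot> (U - V) = W \<odot> U - W \<odot> V"
  using cl_mult_add_right[of W "U - V" V] by (simp add: eq_diff_eq)

lemma cl_mult_minus_left: "(- U) \<odot> V = - (U \<odot> V)"
  by (rule ext) (simp add: cl_mult_eq sum_negf[symmetric])

lemma cl_mult_minus_right: "V \<odot> (- U) = - (V \<odot> U)"
  by (rule ext) (simp add: cl_mult_eq sum_negf[symmetric])

lemma cl_mult_scale_left: "scale a U \<odot> W = scale a (U \<odot> W)"
  by (rule ext) (simp add: cl_mult_eq scale_def sum_distrib_left algebra_simps)

lemma cl_mult_scale_right: "W \<odot> scale a U = scale a (W \<odot> U)"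
  by (rule ext) (simp add: cl_mult_eq scale_def sum_distrib_left algebra_simps)

lemma cl_mult_zero_left [simp]: "0 \<odot> W = 0"
  by (rule ext) (simp add: cl_mult_eq)

lemma cl_mult_zero_right [simp]: "W \<odot> 0 = 0"
  by (rule ext) (simp add: cl_mult_eq)

lemma scalar_part_commute: "(U \<odot> V) {} = (V \<odot> U) {}"
  by (simp add: cl_mult_eq ac_simps)

lemma involute_mult: "involute (U \<odot> V) = involute U \<odot> involute V"
proof (rule ext)
  fix C show "involute (U \<odot> V) C = (involute U \<odot> involute V) C"
  proof (cases "C \<subseteq> {..<n}")
    case True
    let ?f = "blade_factor eta"
    have "involute (U \<odot> V) C = (\<Sum>A\<in>Pow {..<n}. (-1) ^ card C * (?f A (sym_diff A C) * U A * V (sym_diff A C)))"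
      using True by (simp add: involute_def cl_mult_eq sum_distrib_left)
    also have "\<dots> = (\<Sum>A\<in>Pow {..<n}. ?f A (sym_diff A C) * ((-1) ^ card A * U A)
        * ((-1) ^ card (sym_diff A C) * V (sym_diff A C)))"
    proof (rule sum.cong[OF refl])
      fix A assume "A \<in> Pow {..<n}"
      then have "finite A" "finite C" using True finite_subset by auto
      then have "(-1::'a) ^ card A * (-1) ^ card (sym_diff A C) = ((-1) ^ card A * (-1) ^ card A) * (-1) ^ card C"
        by (simp add: neg_one_power_card_sym_diff ac_simps)
      then have "(-1) ^ card C = (-1::'a) ^ card A * (-1) ^ card (sym_diff A C)"
        by (simp flip: power_add add: mult_2[symmetric] power_mult)
      then show "(-1) ^ card C * (?f A (sym_diff A C) * U A * V (sym_diff A C))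
          = ?f A (sym_diff A C) * ((-1) ^ card A * U A) * ((-1) ^ card (sym_diff A C) * V (sym_diff A C))"
        by (simp only: ac_simps)
    qed
    also have "\<dots> = (involute U \<odot> involute V) C" using True by (simp add: involute_def cl_mult_eq)
    finally show ?thesis .
  qed (simp add: involute_def cl_mult_eq)
qed

lemma cl_rev_mult: "cl_rev (U \<odot> V) = cl_rev V \<odot> cl_rev U"
proof (rule ext)
  fix C show "cl_rev (U \<odot> V) C = (cl_rev V \<odot> cl_rev U) C"
  proof (cases "C \<subseteq> {..<n}")
    case True
    let ?f = "blade_factor eta"
    have "(cl_rev V \<odot> cl_rev U) C = (\<Sum>B\<in>Pow {..<n}. ?f B (sym_diff B C) * (rev_sign (card B) * V B)
        * (rev_sign (card (sym_diff B C)) * U (sym_diff B C)))"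
      using True by (simp add: cl_mult_eq cl_rev_eq)
    also have "\<dots> = (\<Sum>A\<in>Pow {..<n}. ?f (sym_diff A C) A * (rev_sign (card (sym_diff A C)) * V (sym_diff A C))
        * (rev_sign (card A) * U A))"
      using sum_Pow_sym_diff_reindex[OF True, of "\<lambda>B. ?f B (sym_diff B C) * (rev_sign (card B) * V B)
          * (rev_sign (card (sym_diff B C)) * U (sym_diff B C))"]
      by (simp only: sym_diff_cancel Un_commute)
    also have "\<dots> = (\<Sum>A\<in>Pow {..<n}. rev_sign (card C) * (?f A (sym_diff A C) * U A * V (sym_diff A C)))"
    proof (rule sum.cong[OF refl])
      fix A assume "A \<in> Pow {..<n}"
      then have "finite A" "finite (sym_diff A C)" using True by (auto intro: finite_subset)
      from rev_sign_blade_factor[OF this, of eta]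
      show "?f (sym_diff A C) A * (rev_sign (card (sym_diff A C)) * V (sym_diff A C)) * (rev_sign (card A) * U A)
          = rev_sign (card C) * (?f A (sym_diff A C) * U A * V (sym_diff A C))"
        by (simp add: ac_simps)
    qed
    also have "\<dots> = cl_rev (U \<odot> V) C" using True by (simp add: cl_mult_eq cl_rev_eq sum_distrib_left)
    finally show ?thesis by simp
  qed (simp add: cl_rev_def cl_mult_eq)
qed

section \<open>Invertible elements\<close>

lemma cl_inverse_unique:
  assumes "V \<in> clif n" "V' \<in> clif n" "V \<odot> T = cl_one" "T \<odot> V' = cl_one"
  shows "V = V'"
proof -
  have "V = V \<odot> (T \<odot> V')" using assms by (simp add: cl_mult_one_right)
  also have "\<dots> = (V \<odot> T) \<odot> V'" by (simp add: cl_mult_assoc)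
  also have "\<dots> = V'" using assms by (simp add: cl_mult_one_left)
  finally show ?thesis .
qed

lemma cl_inv:
  assumes "cl_invertible n eta T"
  shows "cl_inv n eta T \<in> clif n" "T \<odot> cl_inv n eta T = cl_one" "cl_inv n eta T \<odot> T = cl_one"
proof -
  obtain V where V: "V \<in> clif n" "T \<odot> V = cl_one" "V \<odot> T = cl_one"
    using assms unfolding cl_invertible_def by blast
  have "cl_inv n eta T = V"
    unfolding cl_inv_def
  proof (rule the_equality)
    fix W assume "W \<in> clif n \<and> T \<odot> W = cl_one \<and> W \<odot> T = cl_one"
    then show "W = V" using cl_inverse_unique[of W V T] V by simp
  qed (use V in simp)
  then show "cl_inv n eta T \<in> clif n" "T \<odot> cl_inv n eta T = cl_one" "cl_inv n eta T \<odot> T = cl_one"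
    using V by simp_all
qed

lemma cl_invertible_clif: "cl_invertible n eta T \<Longrightarrow> T \<in> clif n"
  unfolding cl_invertible_def by simp

lemma cl_invertibleI:
  assumes "T \<in> clif n" "V \<in> clif n" "T \<odot> V = cl_one" "V \<odot> T = cl_one"
  shows "cl_invertible n eta T" "cl_inv n eta T = V"
proof -
  show inv: "cl_invertible n eta T" unfolding cl_invertible_def using assms by blast
  show "cl_inv n eta T = V" using cl_inverse_unique[of V "cl_inv n eta T" T] cl_inv[OF inv] assms by simp
qed

lemma cl_invertible_mult:
  assumes "cl_invertible n eta T" "cl_invertible n eta S"
  shows "cl_invertible n eta (T \<odot> S)" "cl_inv n eta (T \<odot> S) = cl_inv n eta S \<odot> cl_inv n eta T"
proof -
  note t = cl_inv[OF assms(1)] and s = cl_inv[OF assms(2)]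
  have "(T \<odot> S) \<odot> (cl_inv n eta S \<odot> cl_inv n eta T) = T \<odot> ((S \<odot> cl_inv n eta S) \<odot> cl_inv n eta T)"
    by (simp only: cl_mult_assoc)
  then have 1: "(T \<odot> S) \<odot> (cl_inv n eta S \<odot> cl_inv n eta T) = cl_one"
    using t s by (simp add: cl_mult_one_left)
  have "(cl_inv n eta S \<odot> cl_inv n eta T) \<odot> (T \<odot> S) = cl_inv n eta S \<odot> ((cl_inv n eta T \<odot> T) \<odot> S)"
    by (simp only: cl_mult_assoc)
  then have 2: "(cl_inv n eta S \<odot> cl_inv n eta T) \<odot> (T \<odot> S) = cl_one"
    using t s cl_invertible_clif[OF assms(2)] by (simp add: cl_mult_one_left)
  from cl_invertibleI[OF cl_mult_clif cl_mult_clif 1 2]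
  show "cl_invertible n eta (T \<odot> S)" "cl_inv n eta (T \<odot> S) = cl_inv n eta S \<odot> cl_inv n eta T"
    by auto
qed

lemma cl_invertible_one: "cl_invertible n eta cl_one"
  using cl_invertibleI[of cl_one cl_one] cl_one_clif cl_mult_one_left[OF cl_one_clif] by auto

lemma cl_invertible_rev:
  assumes "cl_invertible n eta T"
  shows "cl_invertible n eta (cl_rev T)"
proof -
  note t = cl_inv[OF assms]
  have "cl_rev T \<odot> cl_rev (cl_inv n eta T) = cl_one" "cl_rev (cl_inv n eta T) \<odot> cl_rev T = cl_one"
    using t by (simp_all flip: cl_rev_mult)
  then show ?thesis
    using cl_invertibleI cl_rev_clif cl_invertible_clif[OF assms] t(1) by blast
qed

lemma cl_inv_involute:
  assumes "cl_invertible n eta T"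
  shows "cl_inv n eta (involute T) = involute (cl_inv n eta T)"
proof -
  note t = cl_inv[OF assms]
  have "involute T \<odot> involute (cl_inv n eta T) = cl_one" "involute (cl_inv n eta T) \<odot> involute T = cl_one"
    using t by (simp_all flip: involute_mult)
  then show ?thesis
    using cl_invertibleI involute_clif cl_invertible_clif[OF assms] t(1) by blast
qed

lemma cl_inv_minus:
  assumes "cl_invertible n eta S"
  shows "cl_inv n eta (- S) = - cl_inv n eta S"
proof -
  note s = cl_inv[OF assms]
  have "(- S) \<odot> (- cl_inv n eta S) = cl_one" "(- cl_inv n eta S) \<odot> (- S) = cl_one"
    using s by (simp_all add: cl_mult_minus_left cl_mult_minus_right)
  then show ?thesis
    using cl_invertibleI minus_clif cl_invertible_clif[OF assms] s(1) by blast
qed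

lemma cl_invertible_cancel_left:
  assumes "cl_invertible n eta T" "X \<in> clif n" "T \<odot> X = 0"
  shows "X = 0"
proof -
  have "X = (cl_inv n eta T \<odot> T) \<odot> X" using cl_inv[OF assms(1)] assms by (simp add: cl_mult_one_left)
  also have "\<dots> = 0" using assms by (simp add: cl_mult_assoc)
  finally show ?thesis .
qed

lemma cl_invertible_cancel_right:
  assumes "cl_invertible n eta T" "X \<in> clif n" "X \<odot> T = 0"
  shows "X = 0"
proof -
  have "X = X \<odot> (T \<odot> cl_inv n eta T)" using cl_inv[OF assms(1)] assms by (simp add: cl_mult_one_right)
  also have "\<dots> = 0" using assms by (simp flip: cl_mult_assoc)
  finally show ?thesis .
qed

lemma cl_inv_cancel:
  assumes "cl_invertible n eta T" "Z \<in> clif n"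
  shows "T \<odot> (cl_inv n eta T \<odot> Z) = Z" "cl_inv n eta T \<odot> (T \<odot> Z) = Z"
    "Z \<odot> (T \<odot> cl_inv n eta T) = Z" "Z \<odot> (cl_inv n eta T \<odot> T) = Z"
  using cl_inv[OF assms(1)] assms(2)
  by (simp_all add: cl_mult_one_left cl_mult_one_right flip: cl_mult_assoc)

section \<open>Grades, pseudoscalar and centre\<close>

lemma gradesI:
  assumes "Y \<in> clif n" "\<And>A. A \<subseteq> {..<n} \<Longrightarrow> card A \<notin> K \<Longrightarrow> Y A = 0"
  shows "Y \<in> grades n K"
  unfolding grades_def using assms clif_outside[OF assms(1)] by blast

lemma grades_clif: "X \<in> grades n K \<Longrightarrow> X \<in> clif n"
  unfolding grades_def by simp

lemma grades_coeff_zero: "X \<in> grades n K \<Longrightarrow> card A \<notin> K \<Longrightarrow> X A = 0"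
  unfolding grades_def by simp

lemma grade_clif: "X \<in> grade n k \<Longrightarrow> X \<in> clif n"
  unfolding grade_def by (rule grades_clif)

lemma grade_coeff_zero: "X \<in> grade n k \<Longrightarrow> card A \<noteq> k \<Longrightarrow> X A = 0"
  unfolding grade_def by (simp add: grades_coeff_zero)

lemma gradeI:
  assumes "Y \<in> clif n" "\<And>A. A \<subseteq> {..<n} \<Longrightarrow> card A \<noteq> k \<Longrightarrow> Y A = 0"
  shows "Y \<in> grade n k"
  unfolding grade_def using assms by (intro gradesI) auto

lemma blade_grade: "B \<subseteq> {..<n} \<Longrightarrow> blade B \<in> grade n (card B)"
  by (rule gradeI[OF blade_clif]) (auto simp: blade_def)

lemma cl_rev_grade: "X \<in> grade n k \<Longrightarrow> cl_rev X = scale (rev_sign k) X"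
  unfolding scale_def cl_rev_eq[abs_def] using grade_coeff_zero by fastforce

lemma involute_grade: "X \<in> grade n k \<Longrightarrow> involute X = scale ((-1) ^ k) X"
  unfolding scale_def involute_def using grade_coeff_zero by fastforce

lemma coeff_zero_if_cl_rev_eq_scale:
  "cl_rev Y = scale r Y \<Longrightarrow> rev_sign (card A) \<noteq> r \<Longrightarrow> Y A = 0"
  unfolding cl_rev_eq[abs_def] scale_def by (drule fun_cong[of _ _ A]) auto

lemma coeff_zero_if_involute_eq_scale:
  "involute Y = scale r Y \<Longrightarrow> (-1) ^ card A \<noteq> r \<Longrightarrow> Y A = 0"
  unfolding involute_def scale_def by (drule fun_cong[of _ _ A]) auto

lemma even_partI:
  fixes X :: "'a mv"
  assumes "X \<in> clif n" "involute X = X"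
  shows "X \<in> even_part n"
proof -
  have "X A = 0" if "odd (card A)" for A
    using coeff_zero_if_involute_eq_scale[of X 1 A] assms that by simp
  then show ?thesis unfolding even_part_def using assms(1) by (intro gradesI) auto
qed

lemma odd_partI:
  fixes X :: "'a mv"
  assumes "X \<in> clif n" "involute X = - X"
  shows "X \<in> odd_part n"
proof -
  have "involute X = scale (-1) X" using assms(2) unfolding scale_def by auto
  then have "X A = 0" if "even (card A)" for A
    using coeff_zero_if_involute_eq_scale[of X "-1" A] that by simp
  then show ?thesis unfolding odd_part_def using assms(1) by (intro gradesI) auto
qed

lemma involute_even_part:
  assumes "X \<in> even_part n"
  shows "involute X = X"
proof
  fix A
  show "involute X A = X A"
    using grades_coeff_zero[OF assms[unfolded even_part_def], of A]
    by (cases "even (card A)") (auto simp: involute_def)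
qed

lemma involute_odd_part:
  assumes "X \<in> odd_part n"
  shows "involute X = - X"
proof
  fix A
  show "involute X A = (- X) A"
    using grades_coeff_zero[OF assms[unfolded odd_part_def], of A]
    by (cases "even (card A)") (auto simp: involute_def)
qed

lemma grade_even_part: "even k \<Longrightarrow> X \<in> grade n k \<Longrightarrow> X \<in> even_part n"
  unfolding grade_def even_part_def grades_def by auto

definition even_comp :: "'a mv \<Rightarrow> 'a mv" where
  "even_comp T = scale (1/2) (T + involute T)"

definition odd_comp :: "'a mv \<Rightarrow> 'a mv" where
  "odd_comp T = scale (1/2) (T - involute T)"

lemma even_comp_add_odd_comp: "even_comp T + odd_comp T = T"
  unfolding even_comp_def odd_comp_def scale_def by (rule ext) (simp add: field_simps)

lemma even_comp_clif: "T \<in> clif n \<Longrightarrow> even_comp T \<in> clif n"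
  unfolding even_comp_def by (intro scale_clif add_clif involute_clif)

lemma odd_comp_clif: "T \<in> clif n \<Longrightarrow> odd_comp T \<in> clif n"
  unfolding odd_comp_def by (intro scale_clif diff_clif involute_clif)

lemma involute_even_comp: "involute (even_comp T) = even_comp T"
  unfolding even_comp_def involute_scale involute_add involute_involute by (simp add: add.commute)

lemma involute_odd_comp: "involute (odd_comp T) = - odd_comp T"
  unfolding odd_comp_def involute_def scale_def by (rule ext) (simp add: algebra_simps)

lemma even_comp_even_part: "T \<in> clif n \<Longrightarrow> even_comp T \<in> even_part n"
  by (rule even_partI[OF even_comp_clif involute_even_comp])

lemma odd_comp_odd_part: "T \<in> clif n \<Longrightarrow> odd_comp T \<in> odd_part n"
  by (rule odd_partI[OF odd_comp_clif involute_odd_comp])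

lemma commute_blade_coeff_parity:
  assumes B: "B \<subseteq> {..<n}" and comm: "N \<odot> blade B = blade B \<odot> N"
    and A: "A \<subseteq> {..<n}" and nz: "N A \<noteq> 0"
  shows "even (card A * card B + card (A \<inter> B))"
proof -
  let ?C = "sym_diff A B"
  have "?C \<subseteq> {..<n}" using A B by blast
  then have "blade_factor eta A B * N A = blade_factor eta B A * N A"
    using fun_cong[OF comm, of ?C] B
    by (simp add: cl_mult_blade_right cl_mult_blade_left sym_diff_commute[of B])
  then have "blade_factor eta A B = blade_factor eta B A" using nz by simp
  also have "\<dots> = (-1) ^ (card A * card B + card (A \<inter> B)) * blade_factor eta A B"
    using A B by (intro blade_factor_swap) (auto intro: finite_subset)
  finally have "(-1::'a) ^ (card A * card B + card (A \<inter> B)) = 1"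
    using blade_factor_nonzero[of A B] by simp
  then show ?thesis by (metis neg_one_odd_power one_neq_neg_one)
qed

lemma cl_mult_commuteI:
  assumes parity: "\<And>A B. A \<subseteq> {..<n} \<Longrightarrow> B \<subseteq> {..<n} \<Longrightarrow> N A \<noteq> 0 \<Longrightarrow> U B \<noteq> 0
      \<Longrightarrow> even (card A * card B + card (A \<inter> B))"
  shows "N \<odot> U = U \<odot> N"
proof (rule ext)
  fix C show "(N \<odot> U) C = (U \<odot> N) C"
  proof (cases "C \<subseteq> {..<n}")
    case True
    let ?f = "blade_factor eta"
    have "(U \<odot> N) C = (\<Sum>A\<in>Pow {..<n}. ?f A (sym_diff A C) * U A * N (sym_diff A C))"
      using True by (simp add: cl_mult_eq)
    also have "\<dots> = (\<Sum>A\<in>Pow {..<n}. ?f (sym_diff A C) A * U (sym_diff A C) * N A)"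
      using sum_Pow_sym_diff_reindex[OF True, of "\<lambda>A. ?f A (sym_diff A C) * U A * N (sym_diff A C)"]
      by (simp only: sym_diff_cancel sym_diff_commute[of C])
    also have "\<dots> = (\<Sum>A\<in>Pow {..<n}. ?f A (sym_diff A C) * N A * U (sym_diff A C))"
    proof (rule sum.cong[OF refl])
      fix A assume A: "A \<in> Pow {..<n}"
      have B: "sym_diff A C \<subseteq> {..<n}" using A True by blast
      show "?f (sym_diff A C) A * U (sym_diff A C) * N A = ?f A (sym_diff A C) * N A * U (sym_diff A C)"
      proof (cases "N A = 0 \<or> U (sym_diff A C) = 0")
        case False
        then have "even (card A * card (sym_diff A C) + card (A \<inter> sym_diff A C))"
          using parity[of A "sym_diff A C"] A B by auto
        moreover have "finite A" "finite (sym_diff A C)" using A B by (auto intro: finite_subset)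
        ultimately have "?f (sym_diff A C) A = ?f A (sym_diff A C)"
          using blade_factor_swap[of A "sym_diff A C"] by simp
        then show ?thesis by (simp add: ac_simps)
      qed auto
    qed
    also have "\<dots> = (N \<odot> U) C" using True by (simp add: cl_mult_eq)
    finally show ?thesis by simp
  qed (simp add: cl_mult_eq)
qed

definition pseudoscalar :: "'a mv" where
  "pseudoscalar = blade {..<n}"

definition ps_sq :: "'a" where
  "ps_sq = blade_factor eta {..<n} {..<n}"

definition scalar_ps :: "'a \<Rightarrow> 'a \<Rightarrow> 'a mv" where
  "scalar_ps a b = scale a cl_one + scale b pseudoscalar"

lemma pseudoscalar_clif: "pseudoscalar \<in> clif n"
  unfolding pseudoscalar_def by (rule blade_clif) simp

lemma scalar_ps_clif: "scalar_ps a b \<in> clif n"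
  unfolding scalar_ps_def by (intro add_clif scale_clif cl_one_clif pseudoscalar_clif)

lemma ps_sq_cases: "ps_sq = 1 \<or> ps_sq = -1"
proof -
  have "ps_sq * ps_sq = 1"
    unfolding ps_sq_def blade_factor_def using blade_sign_square prod_eta_square
    by (metis (no_types, lifting) mult.assoc mult.left_commute mult_1)
  then have "(ps_sq - 1) * (ps_sq + 1) = 0" by (simp add: algebra_simps)
  then show ?thesis by (auto simp: eq_neg_iff_add_eq_0)
qed

lemma ps_sq_nonzero: "ps_sq \<noteq> 0"
  using ps_sq_cases by auto

lemma pseudoscalar_mult_self: "pseudoscalar \<odot> pseudoscalar = scale ps_sq cl_one"
proof (rule ext)
  fix C
  show "(pseudoscalar \<odot> pseudoscalar) C = scale ps_sq cl_one C"
  proof (cases "C \<subseteq> {..<n}")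
    case True
    have "(pseudoscalar \<odot> pseudoscalar) C = blade_factor eta (sym_diff {..<n} C) {..<n} * blade {..<n} (sym_diff {..<n} C)"
      using True unfolding pseudoscalar_def by (simp add: cl_mult_blade_right)
    moreover have "sym_diff {..<n} C = {..<n} \<longleftrightarrow> C = {}" using True by blast
    ultimately show ?thesis unfolding blade_def scale_def cl_one_def ps_sq_def by auto
  qed (auto simp: pseudoscalar_def cl_mult_blade_right scale_def cl_one_def)
qed

lemma scalar_part_mult_pseudoscalar: "(U \<odot> pseudoscalar) {} = ps_sq * U {..<n}"
  unfolding pseudoscalar_def ps_sq_def by (simp add: cl_mult_blade_right)

lemma cl_mult_scalar_ps_right: "X \<in> clif n \<Longrightarrow> X \<odot> scalar_ps a b = scale a X + scale b (X \<odot> pseudoscalar)"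
  unfolding scalar_ps_def by (simp add: cl_mult_add_right cl_mult_scale_right cl_mult_one_right)

lemma cl_mult_scalar_ps_left: "X \<in> clif n \<Longrightarrow> scalar_ps a b \<odot> X = scale a X + scale b (pseudoscalar \<odot> X)"
  unfolding scalar_ps_def by (simp add: cl_mult_add_left cl_mult_scale_left cl_mult_one_left)

lemma scalar_ps_mult: "scalar_ps a b \<odot> scalar_ps c d = scalar_ps (a * c + ps_sq * b * d) (a * d + b * c)"
proof -
  have "scalar_ps a b \<odot> scalar_ps c d = scale a (scalar_ps c d) + scale b (pseudoscalar \<odot> scalar_ps c d)"
    by (rule cl_mult_scalar_ps_left[OF scalar_ps_clif])
  also have "pseudoscalar \<odot> scalar_ps c d = scale c pseudoscalar + scale d (scale ps_sq cl_one)"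
    using cl_mult_scalar_ps_right[OF pseudoscalar_clif] pseudoscalar_mult_self by simp
  also have "scale a (scalar_ps c d) + scale b (scale c pseudoscalar + scale d (scale ps_sq cl_one))
      = scalar_ps (a * c + ps_sq * b * d) (a * d + b * c)"
    unfolding scalar_ps_def by (rule ext) (simp add: scale_def algebra_simps)
  finally show ?thesis .
qed

lemma scalar_ps_add: "scalar_ps a b + scalar_ps c d = scalar_ps (a + c) (b + d)"
  unfolding scalar_ps_def by (rule ext) (simp add: scale_def algebra_simps)

lemma scalar_ps_one: "scalar_ps 1 0 = cl_one"
  unfolding scalar_ps_def by (rule ext) (simp add: scale_def)

lemma scalar_ps_zero: "scalar_ps 0 0 = 0"
  unfolding scalar_ps_def by (rule ext) (simp add: scale_def)

lemma pseudoscalar_eq_scalar_ps: "pseudoscalar = scalar_ps 0 1"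
  unfolding scalar_ps_def by (rule ext) (simp add: scale_def)

lemma cl_one_minus_scalar_ps: "cl_one - scalar_ps a b = scalar_ps (1 - a) (- b)"
  unfolding scalar_ps_def by (rule ext) (simp add: scale_def algebra_simps)

lemma scalar_ps_empty: "0 < n \<Longrightarrow> scalar_ps a b {} = a"
  unfolding scalar_ps_def pseudoscalar_def by (auto simp: scale_def cl_one_def blade_def)

lemma scalar_ps_full: "0 < n \<Longrightarrow> scalar_ps a b {..<n} = b"
  unfolding scalar_ps_def pseudoscalar_def by (auto simp: scale_def cl_one_def blade_def)

lemma involute_scalar_ps: "involute (scalar_ps a b) = scalar_ps a ((-1) ^ n * b)"
  unfolding scalar_ps_def pseudoscalar_def involute_def scale_def cl_one_def blade_def
  by (rule ext) (auto simp: lessThan_empty_iff)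

lemma cl_rev_scalar_ps: "cl_rev (scalar_ps a b) = scalar_ps a (rev_sign n * b)"
  unfolding scalar_ps_def pseudoscalar_def cl_rev_eq[abs_def] scale_def cl_one_def blade_def
  by (rule ext) (auto simp: rev_sign_def lessThan_empty_iff)

lemma scalar_ps_grades_0_n: "scalar_ps a b \<in> grades n {0, n}"
  by (rule gradesI[OF scalar_ps_clif])
     (auto simp: scalar_ps_def pseudoscalar_def scale_def cl_one_def blade_def)

lemma scalar_ps_grades_0: "scalar_ps a 0 \<in> grades n {0}"
  by (rule gradesI[OF scalar_ps_clif])
     (auto simp: scalar_ps_def pseudoscalar_def scale_def cl_one_def blade_def)

lemma grades_0_n_eq_scalar_ps:
  assumes "0 < n" "X \<in> grades n {0, n}"
  shows "X = scalar_ps (X {}) (X {..<n})"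
proof (rule clif_eqI[OF grades_clif[OF assms(2)] scalar_ps_clif])
  fix A assume A: "A \<subseteq> {..<n}"
  then have "finite A" by (rule finite_subset) simp
  then consider "A = {}" | "A = {..<n}" | "card A \<notin> {0, n}" "A \<noteq> {}" "A \<noteq> {..<n}"
    using subset_lessThan_card_eq[OF A] by fastforce
  then show "X A = scalar_ps (X {}) (X {..<n}) A"
  proof cases
    case 3
    then show ?thesis using grades_coeff_zero[OF assms(2)]
      unfolding scalar_ps_def pseudoscalar_def by (simp add: scale_def cl_one_def blade_def)
  qed (use assms in \<open>simp_all add: scalar_ps_empty scalar_ps_full\<close>)
qed

lemma grades_0_eq_scalar_ps:
  assumes "0 < n" "X \<in> grades n {0}"
  shows "X = scalar_ps (X {}) 0"
proof -
  have "X \<in> grades n {0, n}" using assms(2) unfolding grades_def by auto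
  moreover have "X {..<n} = 0" using assms grades_coeff_zero[of X "{0}" "{..<n}"] by simp
  ultimately show ?thesis using grades_0_n_eq_scalar_ps[OF assms(1)] by metis
qed

lemma grades_0_n_commute:
  assumes "X \<in> grades n {0, n}" "odd n \<or> U \<in> even_part n"
  shows "X \<odot> U = U \<odot> X"
proof (rule cl_mult_commuteI)
  fix A B assume A: "A \<subseteq> {..<n}" and B: "B \<subseteq> {..<n}" and "X A \<noteq> 0" "U B \<noteq> 0"
  then have "card A \<in> {0, n}" using assms grades_coeff_zero by blast
  moreover have "finite A" using A by (rule finite_subset) simp
  moreover have "odd n \<or> even (card B)"
    using assms(2) \<open>U B \<noteq> 0\<close> grades_coeff_zero unfolding even_part_def by blast
  ultimately show "even (card A * card B + card (A \<inter> B))"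
    using subset_lessThan_card_eq[OF A] B by (auto simp: Int_absorb1)
qed

lemma pseudoscalar_mult_commute_involute:
  assumes "even n"
  shows "pseudoscalar \<odot> U = involute U \<odot> pseudoscalar"
proof (rule ext)
  fix C show "(pseudoscalar \<odot> U) C = (involute U \<odot> pseudoscalar) C"
  proof (cases "C \<subseteq> {..<n}")
    case True
    let ?B = "sym_diff {..<n} C"
    have B: "?B \<subseteq> {..<n}" "finite ?B" using True by (auto intro: finite_subset)
    then have "blade_factor eta ?B {..<n} = (-1) ^ (n * card ?B + card ?B) * blade_factor eta {..<n} ?B"
      using blade_factor_swap[of "{..<n}" ?B] by (simp add: Int_absorb1)
    moreover have "(-1::'a) ^ (n * card ?B + card ?B) * (-1) ^ card ?B = 1"
      using assms by (simp flip: power_add)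
    ultimately show ?thesis using True unfolding pseudoscalar_def
      by (simp add: cl_mult_blade_right cl_mult_blade_left involute_def ac_simps)
  qed (simp add: cl_mult_eq)
qed

lemma center_eq: "center n = (if odd n then grades n {0, n} else grades n {0})"
  unfolding center_def by simp

lemma cl_rev_grades: "X \<in> grades n K \<Longrightarrow> cl_rev X \<in> grades n K"
  unfolding grades_def clif_def cl_rev_def by simp

lemma cl_rev_center: "W \<in> center n \<Longrightarrow> cl_rev W \<in> center n"
  by (auto simp: center_eq cl_rev_grades split: if_splits)

lemma grades_0_subset_center: "grades n {0} \<subseteq> center n"
  unfolding center_def grades_def by auto

lemma scalar_ps_center: "odd n \<Longrightarrow> scalar_ps a b \<in> center n"
  using scalar_ps_grades_0_n by (simp add: center_eq)

lemma cl_one_center: "(cl_one :: 'a mv) \<in> center n"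
  using grades_0_subset_center scalar_ps_grades_0[of 1] unfolding scalar_ps_one by blast

lemma center_commute:
  assumes "W \<in> center n"
  shows "W \<odot> U = U \<odot> W"
proof (cases "odd n")
  case True then show ?thesis using grades_0_n_commute assms by (simp add: center_eq)
next
  case False
  then have "W \<in> grades n {0}" using assms by (simp add: center_eq)
  show ?thesis
  proof (rule cl_mult_commuteI)
    fix A B assume A: "A \<subseteq> {..<n}" and "W A \<noteq> 0"
    then have "card A = 0" using \<open>W \<in> grades n {0}\<close> grades_coeff_zero by blast
    moreover have "finite A" using A by (rule finite_subset) simp
    ultimately show "even (card A * card B + card (A \<inter> B))" by simp
  qed
qed

lemma center_mult:
  assumes n: "0 < n" and W: "W1 \<in> center n" "W2 \<in> center n"
  shows "W1 \<odot> W2 \<in> center n"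
proof (cases "odd n")
  case True
  then have "W1 \<in> grades n {0, n}" "W2 \<in> grades n {0, n}" using W by (simp_all add: center_eq)
  from arg_cong2[where f = "(\<odot>)", OF this[THEN grades_0_n_eq_scalar_ps[OF n]]]
  show ?thesis using True by (simp add: scalar_ps_mult scalar_ps_grades_0_n center_eq)
next
  case False
  then have "W1 \<in> grades n {0}" "W2 \<in> grades n {0}" using W by (simp_all add: center_eq)
  from arg_cong2[where f = "(\<odot>)", OF this[THEN grades_0_eq_scalar_ps[OF n]]]
  show ?thesis using False scalar_ps_grades_0 by (simp add: scalar_ps_mult center_eq)
qed

section \<open>Grade-preserving elements lie in P and Q\<close>

lemma Gamma_intertwines:
  assumes G: "T \<in> Gamma n eta k" and X: "X \<in> grade n k"
  obtains Y where "T \<odot> X = Y \<odot> T" "cl_inv n eta T \<odot> Y = X \<odot> cl_inv n eta T"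
    "involute T \<odot> X = Y \<odot> involute T" "cl_rev T \<odot> Y = X \<odot> cl_rev T"
proof
  define Y where "Y = T \<odot> X \<odot> cl_inv n eta T"
  have inv: "cl_invertible n eta T" and Y: "Y \<in> grade n k"
    using G X unfolding Gamma_def Y_def by auto
  show TX: "T \<odot> X = Y \<odot> T"
    unfolding Y_def using cl_inv_cancel(4)[OF inv cl_mult_clif] by (simp add: cl_mult_assoc)
  show "cl_inv n eta T \<odot> Y = X \<odot> cl_inv n eta T"
    unfolding Y_def using cl_inv_cancel(2)[OF inv cl_mult_clif] by (simp add: cl_mult_assoc)
  have "scale ((-1) ^ k) (involute T \<odot> X) = scale ((-1) ^ k) (Y \<odot> involute T)"
    using arg_cong[OF TX, of involute]
    unfolding involute_mult involute_grade[OF X] involute_grade[OF Y]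
    by (simp add: cl_mult_scale_left cl_mult_scale_right)
  then show "involute T \<odot> X = Y \<odot> involute T" by (rule scale_cancel[rotated]) simp
  have "scale (rev_sign k) Y = scale (rev_sign k) (cl_rev (cl_inv n eta T) \<odot> X \<odot> cl_rev T)"
    using arg_cong[OF Y_def, of cl_rev]
    unfolding cl_rev_mult cl_rev_grade[OF X] cl_rev_grade[OF Y]
    by (simp add: cl_mult_scale_left cl_mult_scale_right cl_mult_assoc)
  then have "Y = cl_rev (cl_inv n eta T) \<odot> X \<odot> cl_rev T"
    using scale_cancel rev_sign_nonzero by blast
  moreover have "cl_rev T \<odot> cl_rev (cl_inv n eta T) = cl_one"
    using cl_inv[OF inv] by (simp flip: cl_rev_mult)
  ultimately show "cl_rev T \<odot> Y = X \<odot> cl_rev T"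
    using grade_clif[OF X] by (simp add: cl_mult_one_left cl_mult_clif flip: cl_mult_assoc)
qed

lemma Gamma_rev_mult_self_commute:
  assumes "T \<in> Gamma n eta k" "X \<in> grade n k"
  shows "(cl_rev T \<odot> T) \<odot> X = X \<odot> (cl_rev T \<odot> T)"
proof -
  obtain Y where TX: "T \<odot> X = Y \<odot> T" and YT: "cl_rev T \<odot> Y = X \<odot> cl_rev T"
    using Gamma_intertwines[OF assms] by metis
  have "(cl_rev T \<odot> T) \<odot> X = (cl_rev T \<odot> Y) \<odot> T"
    by (simp add: TX cl_mult_assoc)
  also have "\<dots> = X \<odot> (cl_rev T \<odot> T)"
    by (simp add: YT cl_mult_assoc)
  finally show ?thesis .
qed

lemma Gamma_inv_mult_even_comp_commute:
  assumes "T \<in> Gamma n eta k" "X \<in> grade n k"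
  shows "(cl_inv n eta T \<odot> even_comp T) \<odot> X = X \<odot> (cl_inv n eta T \<odot> even_comp T)"
proof -
  obtain Y where TX: "T \<odot> X = Y \<odot> T" and TiY: "cl_inv n eta T \<odot> Y = X \<odot> cl_inv n eta T"
    and hTX: "involute T \<odot> X = Y \<odot> involute T"
    using Gamma_intertwines[OF assms] by metis
  have "even_comp T \<odot> X = Y \<odot> even_comp T"
    unfolding even_comp_def cl_mult_scale_left cl_mult_scale_right cl_mult_add_left cl_mult_add_right
      TX hTX ..
  then have "(cl_inv n eta T \<odot> even_comp T) \<odot> X = (cl_inv n eta T \<odot> Y) \<odot> even_comp T"
    by (simp add: cl_mult_assoc)
  then show ?thesis by (simp add: TiY cl_mult_assoc)
qed

text \<open>If \<open>0 < card A < n\<close>, choose \<open>a \<in> A\<close>, \<open>a' \<notin> A\<close> and \<open>k - 1\<close> further indices avoiding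
  both: the two grade-\<open>k\<close> blades obtained by adding \<open>a\<close> resp. \<open>a'\<close> meet \<open>A\<close> in sets of
  different parity, so they cannot both commute with \<open>e\<^sub>A\<close>.\<close>
lemma commutant_coeff:
  assumes k: "1 \<le> k" "k < n"
    and comm: "\<And>B. B \<subseteq> {..<n} \<Longrightarrow> card B = k \<Longrightarrow> N \<odot> blade B = blade B \<odot> N"
    and A: "A \<subseteq> {..<n}" and nz: "N A \<noteq> 0"
  shows "card A = 0 \<or> (card A = n \<and> even ((n + 1) * k))"
proof -
  have parity: "even (card A * k + card (A \<inter> B))" if "B \<subseteq> {..<n}" "card B = k" for B
    using commute_blade_coeff_parity[OF that(1) comm[OF that] A nz] that(2) by simp
  consider "A = {}" | "A = {..<n}" | "A \<noteq> {}" "A \<noteq> {..<n}" by blast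
  then show ?thesis
  proof cases
    case 2
    obtain B where B: "B \<subseteq> {..<n}" "card B = k"
      using obtain_subset_with_card_n[of k "{..<n}"] k by auto
    then have "A \<inter> B = B" using 2 by auto
    then show ?thesis using parity[OF B] B 2 by (simp add: algebra_simps)
  next
    case 3
    then obtain a a' where a: "a \<in> A" "a' \<in> {..<n}" "a' \<notin> A" using A by auto
    then have "a \<noteq> a'" "a \<in> {..<n}" using A by auto
    then have "k - 1 \<le> card ({..<n} - {a, a'})" using a k by (simp add: card_Diff_subset)
    then obtain B0 where B0: "B0 \<subseteq> {..<n} - {a, a'}" "card B0 = k - 1" "finite B0"
      by (rule obtain_subset_with_card_n)
    have "B0 \<subseteq> {..<n}" "a \<notin> B0" "a' \<notin> B0" "a \<in> {..<n}" using B0 a A by auto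
    then have B1: "insert a B0 \<subseteq> {..<n}" "card (insert a B0) = k"
      and B2: "insert a' B0 \<subseteq> {..<n}" "card (insert a' B0) = k"
      using B0 a k by auto
    have "card (A \<inter> insert a B0) = card (A \<inter> B0) + 1"
      using a B0 \<open>a \<notin> B0\<close> by (simp add: card_insert_if)
    moreover have "A \<inter> insert a' B0 = A \<inter> B0" using a by auto
    ultimately show ?thesis using parity[OF B1] parity[OF B2] by simp
  qed simp
qed

lemma commutant_of_grade:
  assumes k: "1 \<le> k" "k < n" and N: "N \<in> clif n"
    and comm: "\<And>B. B \<subseteq> {..<n} \<Longrightarrow> card B = k \<Longrightarrow> N \<odot> blade B = blade B \<odot> N"
  shows "N \<in> grades n {0, n}" "odd ((n + 1) * k) \<Longrightarrow> N \<in> grades n {0}"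
proof -
  have coeff: "N A = 0 \<or> card A = 0 \<or> (card A = n \<and> even ((n + 1) * k))" for A
    using commutant_coeff[OF k comm, of A] clif_outside[OF N, of A] by blast
  show "N \<in> grades n {0, n}" using coeff by (intro gradesI[OF N]) blast
  show "N \<in> grades n {0}" if "odd ((n + 1) * k)" using coeff that by (intro gradesI[OF N]) blast
qed

lemma Gamma_rev_mult_self_grades:
  assumes G: "T \<in> Gamma n eta k" and k: "1 \<le> k" "k < n"
  shows "cl_rev T \<odot> T \<in> grades n {0, n}" "odd ((n + 1) * k) \<Longrightarrow> cl_rev T \<odot> T \<in> grades n {0}"
proof -
  have "(cl_rev T \<odot> T) \<odot> blade B = blade B \<odot> (cl_rev T \<odot> T)" if "B \<subseteq> {..<n}" "card B = k" for B
    using Gamma_rev_mult_self_commute[OF G blade_grade[OF that(1), unfolded that(2)]] .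
  from commutant_of_grade[OF k cl_mult_clif this]
  show "cl_rev T \<odot> T \<in> grades n {0, n}" "odd ((n + 1) * k) \<Longrightarrow> cl_rev T \<odot> T \<in> grades n {0}"
    by blast+
qed

lemma PsetI:
  assumes "W \<in> center n" "cl_invertible n eta W"
    "S \<in> even_part n \<or> S \<in> odd_part n" "cl_invertible n eta S"
  shows "W \<odot> S \<in> Pset n eta"
  unfolding Pset_def units_in_def using assms by blast

lemma PsetE:
  assumes "T \<in> Pset n eta"
  obtains W S where "T = W \<odot> S" "W \<in> center n" "cl_invertible n eta W"
    "S \<in> even_part n \<or> S \<in> odd_part n" "cl_invertible n eta S"
  using assms unfolding Pset_def units_in_def by blast

lemma Pset_invertible: "T \<in> Pset n eta \<Longrightarrow> cl_invertible n eta T"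
  by (erule PsetE) (simp add: cl_invertible_mult)

lemma Pset_if_parity:
  assumes "cl_invertible n eta T" "T \<in> even_part n \<or> T \<in> odd_part n"
  shows "T \<in> Pset n eta"
  using PsetI[OF cl_one_center cl_invertible_one assms(2,1)]
    cl_mult_one_left[OF cl_invertible_clif[OF assms(1)]] by simp

lemma scalar_ps_inverse:
  assumes "a * a - ps_sq * b * b \<noteq> 0"
  defines "d \<equiv> a * a - ps_sq * b * b"
  shows "scalar_ps a b \<odot> scalar_ps (a / d) (- b / d) = cl_one"
    "scalar_ps (a / d) (- b / d) \<odot> scalar_ps a b = cl_one"
proof -
  have "a * (a / d) + ps_sq * b * (- b / d) = d / d"
    unfolding d_def by (simp add: diff_divide_distrib del: divide_self_if)
  also have "\<dots> = 1" unfolding d_def by (rule divide_self[OF assms(1)])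
  finally have "a * (a / d) + ps_sq * b * (- b / d) = 1" .
  moreover have "a * (- b / d) + b * (a / d) = 0" by (simp add: algebra_simps)
  ultimately show "scalar_ps a b \<odot> scalar_ps (a / d) (- b / d) = cl_one"
    "scalar_ps (a / d) (- b / d) \<odot> scalar_ps a b = cl_one"
    by (simp_all add: scalar_ps_mult scalar_ps_one ac_simps)
qed

lemma scalar_ps_singular_pair:
  assumes "a * a - ps_sq * b * b = 0" "(1 - a) * (1 - a) - ps_sq * (- b) * (- b) = 0"
  shows "a = 1 / 2" "scalar_ps a b \<odot> scalar_ps (1 - a) (- b) = 0"
proof -
  have "a * a = (1 - a) * (1 - a)" using assms by (simp add: algebra_simps)
  then show a: "a = 1 / 2" by (simp add: algebra_simps)
  have "a * (1 - a) + ps_sq * b * (- b) = a * (1 - a) - a * a"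
    using assms(1) by (simp add: algebra_simps)
  then have c1: "a * (1 - a) + ps_sq * b * (- b) = 0" by (simp add: a)
  have c2: "a * (- b) + b * (1 - a) = 0" by (simp add: a algebra_simps)
  show "scalar_ps a b \<odot> scalar_ps (1 - a) (- b) = 0"
    unfolding scalar_ps_mult c1 c2 by (rule scalar_ps_zero)
qed

lemma Pset_if_mult_scalar_ps_parity:
  assumes n: "odd n" and T: "cl_invertible n eta T" and TS: "T \<odot> scalar_ps a b = S"
    and S: "S \<in> even_part n \<or> S \<in> odd_part n" and d: "a * a - ps_sq * b * b \<noteq> 0"
  shows "T \<in> Pset n eta"
proof -
  obtain c where c: "scalar_ps a b \<odot> c = cl_one" "c \<odot> scalar_ps a b = cl_one" "c \<in> center n"
    using scalar_ps_inverse[OF d] scalar_ps_center[OF n] by blast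
  have cinv: "cl_invertible n eta c" "cl_invertible n eta (scalar_ps a b)"
    using cl_invertibleI(1) c scalar_ps_clif grades_clif scalar_ps_grades_0_n n
    by (metis center_eq)+
  have "T = S \<odot> c"
    using c(1) cl_invertible_clif[OF T] by (simp add: TS[symmetric] cl_mult_assoc cl_mult_one_right)
  also have "\<dots> = c \<odot> S" using center_commute[OF c(3)] by simp
  finally show ?thesis
    using PsetI[OF c(3) cinv(1) S] cl_invertible_mult(1)[OF T cinv(2)] TS by simp
qed

lemma scalar_ps_cancel_right:
  assumes "a * a - ps_sq * b * b \<noteq> 0" "X \<in> clif n" "X \<odot> scalar_ps a b = 0"
  shows "X = 0"
proof -
  obtain c where "scalar_ps a b \<odot> c = cl_one"
    using scalar_ps_inverse[OF assms(1)] by blast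
  then have "X = (X \<odot> scalar_ps a b) \<odot> c" using assms(2) by (simp add: cl_mult_assoc cl_mult_one_right)
  then show ?thesis using assms(3) by simp
qed

lemma odd_comp_eq_mult_complement:
  assumes "T \<in> clif n" "T \<odot> scalar_ps a b = even_comp T"
  shows "T \<odot> scalar_ps (1 - a) (- b) = odd_comp T"
proof -
  have "T \<odot> scalar_ps (1 - a) (- b) = T \<odot> (cl_one - scalar_ps a b)"
    by (simp add: cl_one_minus_scalar_ps)
  also have "\<dots> = T - even_comp T"
    using assms by (simp add: cl_mult_diff_right cl_mult_one_right)
  also have "\<dots> = odd_comp T"
    using even_comp_add_odd_comp[of T] by (simp add: algebra_simps)
  finally show ?thesis .
qed

text \<open>In odd dimension, if neither \<open>c = a + b I\<close> nor \<open>1 - c\<close> is invertible, then \<open>a = 1/2\<close>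
  and \<open>c (1 - c) = 0\<close>; the even part of \<open>T\<close> is then killed by \<open>1 - c\<close> and, applying the grade
  involution, also by its conjugate \<open>1 - a + b I\<close>, whose sum with \<open>1 - c\<close> is \<open>1\<close>.\<close>
lemma singular_case_impossible_odd:
  assumes n: "odd n" and inv: "cl_invertible n eta T" and Tc: "T \<odot> scalar_ps a b = even_comp T"
    and sing: "a * a - ps_sq * b * b = 0" "(1 - a) * (1 - a) - ps_sq * (- b) * (- b) = 0"
  shows False
proof -
  note a_half = scalar_ps_singular_pair(1)[OF sing]
  have e0: "even_comp T \<odot> scalar_ps (1 - a) (- b) = 0"
    using scalar_ps_singular_pair(2)[OF sing] by (simp flip: Tc add: cl_mult_assoc)
  then have "involute (even_comp T \<odot> scalar_ps (1 - a) (- b)) = 0"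
    by (simp add: involute_def zero_fun_def)
  then have "even_comp T \<odot> scalar_ps (1 - a) b = 0"
    using n by (simp add: involute_mult involute_even_comp involute_scalar_ps)
  then have "even_comp T \<odot> (scalar_ps (1 - a) (- b) + scalar_ps (1 - a) b) = 0"
    using e0 by (simp add: cl_mult_add_right)
  then have "even_comp T = 0"
    using a_half even_comp_clif[OF cl_invertible_clif[OF inv]]
    by (simp add: scalar_ps_add scalar_ps_one cl_mult_one_right)
  then have "scalar_ps a b = 0" using cl_invertible_cancel_left[OF inv scalar_ps_clif] Tc by simp
  then have "a = 0" using scalar_ps_empty[OF odd_pos[OF n], of a b] by simp
  then show False using a_half by simp
qed

lemma Pset_if_mult_eq_even_comp_odd:
  assumes n: "odd n" and inv: "cl_invertible n eta T" and Tc: "T \<odot> scalar_ps a b = even_comp T"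
  shows "T \<in> Pset n eta"
proof -
  have Tcl: "T \<in> clif n" by (rule cl_invertible_clif[OF inv])
  consider "a * a - ps_sq * b * b \<noteq> 0" | "(1 - a) * (1 - a) - ps_sq * (- b) * (- b) \<noteq> 0"
    | "a * a - ps_sq * b * b = 0" "(1 - a) * (1 - a) - ps_sq * (- b) * (- b) = 0"
    by blast
  then show ?thesis
  proof cases
    case 1
    then show ?thesis
      using Pset_if_mult_scalar_ps_parity[OF n inv Tc] even_comp_even_part[OF Tcl] by blast
  next
    case 2
    then show ?thesis
      using Pset_if_mult_scalar_ps_parity[OF n inv odd_comp_eq_mult_complement[OF Tcl Tc]]
        odd_comp_odd_part[OF Tcl] by blast
  next
    case 3
    then show ?thesis using singular_case_impossible_odd[OF n inv Tc] by blast
  qed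
qed

text \<open>In even dimension \<open>c = a + b I\<close> is fixed by the grade involution, so the odd part of
  \<open>T\<close> is killed by \<open>c\<close> and the even part by \<open>1 - c\<close>.\<close>
lemma even_dim_comps_annihilated:
  assumes n: "even n" and Tcl: "T \<in> clif n" and Tc: "T \<odot> scalar_ps a b = even_comp T"
  shows "odd_comp T \<odot> scalar_ps a b = 0" "even_comp T \<odot> scalar_ps (1 - a) (- b) = 0"
proof -
  have "involute T \<odot> scalar_ps a b = even_comp T"
    using arg_cong[OF Tc, of involute] n by (simp add: involute_mult involute_even_comp involute_scalar_ps)
  then show odc: "odd_comp T \<odot> scalar_ps a b = 0"
    using Tc unfolding odd_comp_def by (simp add: cl_mult_scale_left cl_mult_diff_left)
  have "even_comp T \<odot> scalar_ps a b = (T - odd_comp T) \<odot> scalar_ps a b"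
    using even_comp_add_odd_comp[of T] by (metis add_diff_cancel)
  then have "even_comp T \<odot> scalar_ps a b = even_comp T" using Tc odc by (simp add: cl_mult_diff_left)
  then show "even_comp T \<odot> scalar_ps (1 - a) (- b) = 0" using even_comp_clif[OF Tcl]
    by (simp flip: cl_one_minus_scalar_ps add: cl_mult_diff_right cl_mult_one_right)
qed

text \<open>If both \<open>c\<close> and \<open>1 - c\<close> are singular then \<open>a = 1/2\<close>; \<open>1 - c\<close> commutes with the even part
  of \<open>T\<close>, and since \<open>I\<close> anticommutes with odd elements, \<open>(1 - c) T\<^sub>1 = T\<^sub>1 c\<close> for the odd part
  \<open>T\<^sub>1\<close>; hence \<open>(1 - c) T = 0\<close>, which is absurd.\<close>
lemma singular_case_impossible_even:
  assumes n: "even n" "0 < n" and inv: "cl_invertible n eta T" and Tc: "T \<odot> scalar_ps a b = even_comp T"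
    and sing: "a * a - ps_sq * b * b = 0" "(1 - a) * (1 - a) - ps_sq * (- b) * (- b) = 0"
  shows False
proof -
  let ?c' = "scalar_ps (1 - a) (- b)"
  have Tcl: "T \<in> clif n" by (rule cl_invertible_clif[OF inv])
  note annihilated = even_dim_comps_annihilated[OF n(1) Tcl Tc]
  have a_half: "a = 1 / 2" by (rule scalar_ps_singular_pair(1)[OF sing])
  have "?c' \<odot> even_comp T = 0"
    using grades_0_n_commute[OF scalar_ps_grades_0_n] even_comp_even_part[OF Tcl] annihilated(2) by simp
  moreover have "?c' \<odot> odd_comp T = odd_comp T \<odot> scalar_ps a b"
  proof -
    have "pseudoscalar \<odot> odd_comp T = - (odd_comp T \<odot> pseudoscalar)"
      using pseudoscalar_mult_commute_involute[OF n(1)] by (simp add: involute_odd_comp cl_mult_minus_left)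
    moreover have "1 - a = a" unfolding a_half by simp
    ultimately show ?thesis
      using odd_comp_clif[OF Tcl] by (simp add: cl_mult_scalar_ps_left cl_mult_scalar_ps_right scale_def fun_eq_iff)
  qed
  ultimately have "?c' \<odot> T = 0"
    using annihilated(1) cl_mult_add_right[of ?c' "even_comp T" "odd_comp T"] by (simp add: even_comp_add_odd_comp)
  then have "?c' = 0" using cl_invertible_cancel_right[OF inv scalar_ps_clif] by simp
  then have "1 - a = 0" using scalar_ps_empty[OF n(2), of "1 - a" "- b"] by simp
  then show False using a_half by simp
qed

lemma Pset_if_mult_eq_even_comp_even:
  assumes n: "even n" "0 < n" and inv: "cl_invertible n eta T" and Tc: "T \<odot> scalar_ps a b = even_comp T"
  shows "T \<in> Pset n eta"
proof -
  have Tcl: "T \<in> clif n" by (rule cl_invertible_clif[OF inv])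
  note annihilated = even_dim_comps_annihilated[OF n(1) Tcl Tc]
  consider "a * a - ps_sq * b * b \<noteq> 0" | "(1 - a) * (1 - a) - ps_sq * (- b) * (- b) \<noteq> 0"
    | "a * a - ps_sq * b * b = 0" "(1 - a) * (1 - a) - ps_sq * (- b) * (- b) = 0"
    by blast
  then show ?thesis
  proof cases
    case 1
    then have "odd_comp T = 0" using scalar_ps_cancel_right odd_comp_clif[OF Tcl] annihilated(1) by blast
    then show ?thesis
      using Pset_if_parity[OF inv] even_comp_even_part[OF Tcl] even_comp_add_odd_comp[of T] by simp
  next
    case 2
    then have "even_comp T = 0" using scalar_ps_cancel_right even_comp_clif[OF Tcl] annihilated(2) by blast
    then show ?thesis
      using Pset_if_parity[OF inv] odd_comp_odd_part[OF Tcl] even_comp_add_odd_comp[of T] by simp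
  next
    case 3
    then show ?thesis using singular_case_impossible_even[OF n inv Tc] by blast
  qed
qed

lemma Gamma_subset_Pset:
  assumes G: "T \<in> Gamma n eta k" and k: "1 \<le> k" "k < n"
  shows "T \<in> Pset n eta"
proof -
  have inv: "cl_invertible n eta T" using G unfolding Gamma_def by simp
  let ?M = "cl_inv n eta T \<odot> even_comp T"
  have "?M \<odot> blade B = blade B \<odot> ?M" if "B \<subseteq> {..<n}" "card B = k" for B
    using Gamma_inv_mult_even_comp_commute[OF G blade_grade[OF that(1), unfolded that(2)]] .
  then have "?M \<in> grades n {0, n}" by (rule commutant_of_grade(1)[OF k cl_mult_clif])
  then obtain a b where M: "?M = scalar_ps a b" using grades_0_n_eq_scalar_ps k by fastforce
  have "T \<odot> ?M = even_comp T"
    by (rule cl_inv_cancel(1)[OF inv even_comp_clif[OF cl_invertible_clif[OF inv]]])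
  then have "T \<odot> scalar_ps a b = even_comp T" unfolding M .
  then show ?thesis
    using Pset_if_mult_eq_even_comp_odd[OF _ inv] Pset_if_mult_eq_even_comp_even[OF _ _ inv] k
    by (cases "odd n") auto
qed

lemma Gamma_subset_Qset:
  assumes G: "T \<in> Gamma n eta k" and k: "1 \<le> k" "k < n" and odd: "odd n \<or> odd ((n + 1) * k)"
  shows "T \<in> Qset n eta"
proof -
  have inv: "cl_invertible n eta T" using G unfolding Gamma_def by simp
  have "cl_rev T \<odot> T \<in> center n"
    using Gamma_rev_mult_self_grades[OF G k] odd by (auto simp: center_eq)
  moreover have "cl_invertible n eta (cl_rev T \<odot> T)"
    by (rule cl_invertible_mult(1)[OF cl_invertible_rev[OF inv] inv])
  ultimately show ?thesis unfolding Qset_def units_in_def using Gamma_subset_Pset[OF G k] by simp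
qed

section \<open>Conjugation invariants\<close>

lemma conj_scalar_part:
  assumes inv: "cl_invertible n eta T" and X: "X \<in> clif n"
  shows "(T \<odot> X \<odot> cl_inv n eta T) {} = X {}"
proof -
  have "(T \<odot> X \<odot> cl_inv n eta T) {} = ((X \<odot> cl_inv n eta T) \<odot> T) {}"
    by (simp add: cl_mult_assoc scalar_part_commute[of T])
  also have "\<dots> = X {}" using cl_inv_cancel(4)[OF inv X] by (simp add: cl_mult_assoc)
  finally show ?thesis .
qed

lemma conj_pseudoscalar_part:
  assumes n: "odd n" and inv: "cl_invertible n eta T" and X: "X \<in> clif n"
  shows "(T \<odot> X \<odot> cl_inv n eta T) {..<n} = X {..<n}"
proof -
  have comm: "pseudoscalar \<odot> cl_inv n eta T = cl_inv n eta T \<odot> pseudoscalar"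
    unfolding pseudoscalar_eq_scalar_ps by (rule center_commute[OF scalar_ps_center[OF n]])
  have "ps_sq * (T \<odot> X \<odot> cl_inv n eta T) {..<n} = ((T \<odot> X \<odot> cl_inv n eta T) \<odot> pseudoscalar) {}"
    by (simp add: scalar_part_mult_pseudoscalar)
  also have "(T \<odot> X \<odot> cl_inv n eta T) \<odot> pseudoscalar = T \<odot> (X \<odot> pseudoscalar) \<odot> cl_inv n eta T"
    by (simp only: cl_mult_assoc comm)
  also have "(T \<odot> (X \<odot> pseudoscalar) \<odot> cl_inv n eta T) {} = (X \<odot> pseudoscalar) {}"
    by (rule conj_scalar_part[OF inv cl_mult_clif])
  also have "\<dots> = ps_sq * X {..<n}" by (rule scalar_part_mult_pseudoscalar)
  finally show ?thesis using ps_sq_nonzero by simp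
qed

lemma conj_cl_rev_eq_scale:
  assumes inv: "cl_invertible n eta T" and X: "X \<in> clif n"
    and comm: "(cl_rev T \<odot> T) \<odot> X = X \<odot> (cl_rev T \<odot> T)" and rX: "cl_rev X = scale r X"
  shows "cl_rev (T \<odot> X \<odot> cl_inv n eta T) = scale r (T \<odot> X \<odot> cl_inv n eta T)"
proof -
  let ?Ti = "cl_inv n eta T" and ?N = "cl_rev T \<odot> T"
  note t = cl_inv[OF inv]
  have r1: "cl_rev T = ?N \<odot> ?Ti"
    using t cl_rev_clif[OF cl_invertible_clif[OF inv]] by (simp add: cl_mult_assoc cl_mult_one_right)
  have "cl_rev ?Ti \<odot> cl_rev T = cl_one" using t by (simp flip: cl_rev_mult)
  then have r2: "cl_rev ?Ti \<odot> ?N = T"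
    using cl_invertible_clif[OF inv] by (simp flip: cl_mult_assoc add: cl_mult_one_left)
  have "cl_rev (T \<odot> X \<odot> ?Ti) = scale r (cl_rev ?Ti \<odot> (X \<odot> (?N \<odot> ?Ti)))"
    unfolding cl_rev_mult rX r1[symmetric] by (simp add: cl_mult_scale_left cl_mult_scale_right cl_mult_assoc)
  also have "cl_rev ?Ti \<odot> (X \<odot> (?N \<odot> ?Ti)) = (cl_rev ?Ti \<odot> ?N) \<odot> X \<odot> ?Ti"
    by (simp only: cl_mult_assoc comm[unfolded cl_mult_assoc])
  finally show ?thesis unfolding r2 .
qed

lemma conj_central_factor:
  assumes W: "cl_invertible n eta W" "W \<in> center n" and S: "cl_invertible n eta S"
  shows "(W \<odot> S) \<odot> X \<odot> cl_inv n eta (W \<odot> S) = S \<odot> X \<odot> cl_inv n eta S"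
proof -
  let ?Y = "S \<odot> X \<odot> cl_inv n eta S"
  have "(W \<odot> S) \<odot> X \<odot> cl_inv n eta (W \<odot> S) = (W \<odot> ?Y) \<odot> cl_inv n eta W"
    by (simp add: cl_invertible_mult(2)[OF W(1) S] cl_mult_assoc)
  also have "\<dots> = (?Y \<odot> W) \<odot> cl_inv n eta W"
    by (simp only: center_commute[OF W(2), of ?Y])
  also have "\<dots> = ?Y \<odot> (W \<odot> cl_inv n eta W)"
    by (rule cl_mult_assoc)
  also have "\<dots> = ?Y" using cl_inv(2)[OF W(1)] cl_mult_clif by (simp add: cl_mult_one_right)
  finally show ?thesis .
qed

lemma conj_involute_eq_scale:
  assumes T: "T \<in> Pset n eta" and hX: "involute X = scale s X"
  shows "involute (T \<odot> X \<odot> cl_inv n eta T) = scale s (T \<odot> X \<odot> cl_inv n eta T)"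
proof -
  obtain W S where d: "T = W \<odot> S" "W \<in> center n" "cl_invertible n eta W"
    and S: "S \<in> even_part n \<or> S \<in> odd_part n" "cl_invertible n eta S"
    using T by (rule PsetE)
  have "involute (S \<odot> X \<odot> cl_inv n eta S) = S \<odot> involute X \<odot> cl_inv n eta S"
    using S(1)
  proof
    assume "S \<in> even_part n"
    then show ?thesis using cl_inv_involute[OF S(2)] by (simp add: involute_mult involute_even_part)
  next
    assume odd: "S \<in> odd_part n"
    then have "involute (cl_inv n eta S) = - cl_inv n eta S"
      using cl_inv_involute[OF S(2)] cl_inv_minus[OF S(2)] by (simp add: involute_odd_part)
    then show ?thesis using odd
      by (simp add: involute_mult involute_odd_part cl_mult_minus_left cl_mult_minus_right)
  qed
  then show ?thesis
    unfolding d(1) conj_central_factor[OF d(3,2) S(2)] hX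
    by (simp add: cl_mult_scale_left cl_mult_scale_right)
qed

lemma Gamma_if_conj_invariants:
  assumes inv: "cl_invertible n eta T"
    and comm: "\<And>X. X \<in> grade n k \<Longrightarrow> (cl_rev T \<odot> T) \<odot> X = X \<odot> (cl_rev T \<odot> T)"
    and sep: "\<And>A. A \<subseteq> {..<n} \<Longrightarrow> card A \<noteq> k \<Longrightarrow>
      rev_sign (card A) \<noteq> (rev_sign k :: 'a) \<or> (T \<in> Pset n eta \<and> (-1::'a) ^ card A \<noteq> (-1) ^ k)
      \<or> A = {} \<or> (odd n \<and> A = {..<n})"
  shows "T \<in> Gamma n eta k"
  unfolding Gamma_def
proof (intro CollectI conjI ballI inv)
  fix X :: "'a mv" assume X: "X \<in> grade n k"
  have Xc: "X \<in> clif n" by (rule grade_clif[OF X])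
  show "T \<odot> X \<odot> cl_inv n eta T \<in> grade n k"
  proof (rule gradeI[OF cl_mult_clif])
    fix A assume A: "A \<subseteq> {..<n}" "card A \<noteq> k"
    from sep[OF A] show "(T \<odot> X \<odot> cl_inv n eta T) A = 0"
    proof (elim disjE conjE)
      assume "rev_sign (card A) \<noteq> (rev_sign k :: 'a)"
      with conj_cl_rev_eq_scale[OF inv Xc comm[OF X] cl_rev_grade[OF X]] show ?thesis
        by (rule coeff_zero_if_cl_rev_eq_scale)
    next
      assume "T \<in> Pset n eta" "(-1::'a) ^ card A \<noteq> (-1) ^ k"
      with conj_involute_eq_scale[OF _ involute_grade[OF X]] show ?thesis
        using coeff_zero_if_involute_eq_scale by blast
    next
      assume "A = {}"
      then show ?thesis using conj_scalar_part[OF inv Xc] grade_coeff_zero[OF X] A(2) by simp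
    next
      assume "odd n" "A = {..<n}"
      then show ?thesis using conj_pseudoscalar_part[OF _ inv Xc] grade_coeff_zero[OF X] A(2) by simp
    qed
  qed
qed

lemma Aset_subset_Gamma:
  assumes T: "T \<in> Aset n eta"
    and sep: "\<forall>j \<in> {..n} - {k}. rev_sign j \<noteq> (rev_sign k :: 'a) \<or> j = 0 \<or> (odd n \<and> j = n)"
  shows "T \<in> Gamma n eta k"
proof (rule Gamma_if_conj_invariants)
  show inv: "cl_invertible n eta T" and "\<And>X. (cl_rev T \<odot> T) \<odot> X = X \<odot> (cl_rev T \<odot> T)"
    using T center_commute unfolding Aset_def units_in_def by auto
  fix A assume A: "A \<subseteq> {..<n}" "card A \<noteq> k"
  show "rev_sign (card A) \<noteq> (rev_sign k :: 'a) \<or> (T \<in> Pset n eta \<and> (-1::'a) ^ card A \<noteq> (-1) ^ k)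
      \<or> A = {} \<or> (odd n \<and> A = {..<n})"
    using sep[rule_format, of "card A"] card_subset_lessThan(1)[OF A(1)] A(2) card_subset_lessThan(2,3)[OF A(1)] by auto
qed

lemma Qset_subset_Gamma:
  assumes T: "T \<in> Qset n eta"
    and sep: "\<forall>j \<in> {..n} - {k}.
      rev_sign j \<noteq> (rev_sign k :: 'a) \<or> (-1::'a) ^ j \<noteq> (-1) ^ k \<or> j = 0 \<or> (odd n \<and> j = n)"
  shows "T \<in> Gamma n eta k"
proof (rule Gamma_if_conj_invariants)
  show inv: "cl_invertible n eta T" and "\<And>X. (cl_rev T \<odot> T) \<odot> X = X \<odot> (cl_rev T \<odot> T)"
    using T Pset_invertible center_commute unfolding Qset_def units_in_def by auto
  fix A assume A: "A \<subseteq> {..<n}" "card A \<noteq> k"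
  show "rev_sign (card A) \<noteq> (rev_sign k :: 'a) \<or> (T \<in> Pset n eta \<and> (-1::'a) ^ card A \<noteq> (-1) ^ k)
      \<or> A = {} \<or> (odd n \<and> A = {..<n})"
    using T sep[rule_format, of "card A"] card_subset_lessThan(1)[OF A(1)] A(2) card_subset_lessThan(2,3)[OF A(1)]
    unfolding Qset_def by auto
qed

lemma Pset_subset_Gamma_even_grade:
  assumes T: "T \<in> Pset n eta" and k: "even k" and N: "cl_rev T \<odot> T \<in> grades n {0, n}"
    and sep: "\<forall>j \<in> {..n} - {k}. rev_sign j \<noteq> (rev_sign k :: 'a) \<or> (-1::'a) ^ j \<noteq> (-1) ^ k"
  shows "T \<in> Gamma n eta k"
proof (rule Gamma_if_conj_invariants)
  show "cl_invertible n eta T" by (rule Pset_invertible[OF T])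
  show "(cl_rev T \<odot> T) \<odot> X = X \<odot> (cl_rev T \<odot> T)" if "X \<in> grade n k" for X
    using grades_0_n_commute[OF N] grade_even_part[OF k that] by blast
  fix A assume A: "A \<subseteq> {..<n}" "card A \<noteq> k"
  show "rev_sign (card A) \<noteq> (rev_sign k :: 'a) \<or> (T \<in> Pset n eta \<and> (-1::'a) ^ card A \<noteq> (-1) ^ k)
      \<or> A = {} \<or> (odd n \<and> A = {..<n})"
    using T sep[rule_format, of "card A"] card_subset_lessThan(1)[OF A(1)] A(2) by auto
qed

text \<open>\<open>S\<^sup>~ S\<close> is fixed by both the reversion and the grade involution, so only grades \<open>j\<close>
  with \<open>j\<close> even and \<open>j (j - 1) / 2\<close> even survive.\<close>
lemma rev_mult_self_grades_mod_4:
  assumes "S \<in> even_part n \<or> S \<in> odd_part n"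
  shows "cl_rev S \<odot> S \<in> grades n {j. 4 dvd j}"
proof (rule gradesI[OF cl_mult_clif])
  let ?R = "cl_rev S \<odot> S"
  have h: "involute ?R = scale 1 ?R"
    using assms by (auto simp: involute_mult involute_cl_rev involute_even_part involute_odd_part
        cl_rev_minus cl_mult_minus_left cl_mult_minus_right)
  have r: "cl_rev ?R = scale 1 ?R" by (simp add: cl_rev_mult)
  fix A :: "nat set" assume A: "card A \<notin> {j. 4 dvd j}"
  show "?R A = 0"
  proof (rule ccontr)
    assume nz: "?R A \<noteq> 0"
    then have "(-1::'a) ^ card A = 1" using coeff_zero_if_involute_eq_scale[OF h] by blast
    moreover have "rev_sign (card A) = (1::'a)" using coeff_zero_if_cl_rev_eq_scale[OF r] nz by blast
    ultimately have "4 dvd card A"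
      by (intro four_dvd_if_rev_sign_eq_one) (simp_all add: neg_one_power_eq_one_iff)
    with A show False by simp
  qed
qed

lemma Pset_rev_mult_self:
  assumes n: "0 < n" and T: "T \<in> Pset n eta"
  obtains W S where "cl_rev T \<odot> T = W \<odot> (cl_rev S \<odot> S)" "W \<in> center n"
    "S \<in> even_part n \<or> S \<in> odd_part n"
proof -
  obtain W S where d: "T = W \<odot> S" "W \<in> center n" "S \<in> even_part n \<or> S \<in> odd_part n"
    using T by (rule PsetE)
  let ?C = "cl_rev W \<odot> W"
  have C: "?C \<in> center n" by (rule center_mult[OF n cl_rev_center[OF d(2)] d(2)])
  have "cl_rev T \<odot> T = cl_rev S \<odot> (?C \<odot> S)" unfolding d(1) by (simp add: cl_rev_mult cl_mult_assoc)
  also have "\<dots> = ?C \<odot> (cl_rev S \<odot> S)"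
    by (simp only: cl_mult_assoc[symmetric] center_commute[OF C, of "cl_rev S"])
  finally show ?thesis using that C d(3) by blast
qed

section \<open>Dimensions three, four and five\<close>

lemma grades_mono:
  assumes "K \<inter> {..n} \<subseteq> L"
  shows "grades n K \<subseteq> grades n L"
proof
  fix X assume X: "X \<in> grades n K"
  show "X \<in> grades n L"
  proof (rule gradesI[OF grades_clif[OF X]])
    fix A assume "A \<subseteq> {..<n}" "card A \<notin> L"
    then have "card A \<notin> K" using assms card_subset_lessThan(1) by auto
    then show "X A = 0" by (rule grades_coeff_zero[OF X])
  qed
qed

lemma center_mult_grades_0_n:
  assumes n: "0 < n" and W: "W \<in> center n" and X: "X \<in> grades n {0, n}"
  shows "W \<odot> X \<in> grades n {0, n}"
proof -
  have "W \<in> grades n {0, n}" using W grades_mono[of "{0}" "{0, n}"] by (auto simp: center_eq split: if_splits)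
  from arg_cong2[where f = "(\<odot>)", OF this[THEN grades_0_n_eq_scalar_ps[OF n]] grades_0_n_eq_scalar_ps[OF n X]]
  show ?thesis by (simp add: scalar_ps_mult scalar_ps_grades_0_n)
qed

lemma Pset_rev_mult_self_grades_0_n:
  assumes n: "0 < n" "n \<le> 4" and T: "T \<in> Pset n eta"
  shows "cl_rev T \<odot> T \<in> grades n {0, n}"
proof -
  obtain W S where d: "cl_rev T \<odot> T = W \<odot> (cl_rev S \<odot> S)" "W \<in> center n"
    "S \<in> even_part n \<or> S \<in> odd_part n"
    using Pset_rev_mult_self[OF n(1) T] by blast
  have "{j. 4 dvd j} \<inter> {..n} \<subseteq> {0, n}" using n(2) by (auto dest: dvd_imp_le)
  then have "cl_rev S \<odot> S \<in> grades n {0, n}"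
    using rev_mult_self_grades_mod_4[OF d(3)] grades_mono by blast
  then show ?thesis unfolding d(1) by (rule center_mult_grades_0_n[OF n(1) d(2)])
qed

lemma cl_invertible_rev_mult_self: "cl_invertible n eta T \<Longrightarrow> cl_invertible n eta (cl_rev T \<odot> T)"
  by (rule cl_invertible_mult(1)[OF cl_invertible_rev])

lemma Pset_eq_Qset':
  assumes "0 < n" "n \<le> 4"
  shows "Pset n eta = Qset' n eta"
proof
  show "Pset n eta \<subseteq> Qset' n eta"
  proof
    fix T assume T: "T \<in> Pset n eta"
    then show "T \<in> Qset' n eta"
      unfolding Qset'_def units_in_def
      using Pset_rev_mult_self_grades_0_n[OF assms T]
        cl_invertible_rev_mult_self[OF Pset_invertible[OF T]] by simp
  qed
qed (auto simp: Qset'_def)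

lemma claims_dim_3:
  assumes n: "n = 3"
  shows "Gamma n eta 1 = Gamma n eta 2 \<and> Gamma n eta 2 = Qset n eta
    \<and> Qset n eta = Pset n eta \<and> Pset n eta = Aset n eta"
proof -
  have sep: "\<forall>k \<in> {1, 2}. \<forall>j \<in> {..n} - {k}. rev_sign j \<noteq> (rev_sign k :: 'a) \<or> j = 0 \<or> (odd n \<and> j = n)"
    unfolding n by (simp add: rev_sign_values atMost_nat_numeral atMost_Suc insert_Diff_if)
  have "Gamma n eta k \<subseteq> Qset n eta" "Aset n eta \<subseteq> Gamma n eta k" if k: "k \<in> {1, 2}" for k
  proof
    fix T assume "T \<in> Gamma n eta k"
    then show "T \<in> Qset n eta" by (rule Gamma_subset_Qset) (use k n in auto)
  next
    show "Aset n eta \<subseteq> Gamma n eta k" using Aset_subset_Gamma bspec[OF sep k] by blast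
  qed
  moreover have "Qset n eta \<subseteq> Pset n eta" unfolding Qset_def by auto
  moreover have "0 < n" "n \<le> 4" "odd n" using n by simp_all
  then have "Pset n eta \<subseteq> Aset n eta"
    using Pset_rev_mult_self_grades_0_n Pset_invertible cl_invertible_rev_mult_self
    unfolding Aset_def units_in_def by (auto simp: center_eq)
  ultimately show ?thesis by blast
qed

lemma Qset_ne_Pset_dim_4:
  assumes n: "n = 4"
  shows "Qset n eta \<noteq> Pset n eta"
proof
  assume QP: "Qset n eta = Pset n eta"
  let ?T = "scalar_ps 1 2"
  have "1 * 1 - ps_sq * 2 * 2 \<noteq> (0::'a)" using ps_sq_cases by auto
  then have inv: "cl_invertible n eta ?T"
    using scalar_ps_inverse cl_invertibleI(1)[OF scalar_ps_clif scalar_ps_clif] by blast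
  have "?T \<in> even_part n"
    using grades_mono[of "{0, n}" "{j. even j}"] scalar_ps_grades_0_n n by (auto simp: even_part_def)
  then have "?T \<in> Qset n eta" using QP Pset_if_parity[OF inv] by simp
  moreover have "even n" using n by simp
  ultimately have g: "cl_rev ?T \<odot> ?T \<in> grades n {0}" unfolding Qset_def units_in_def by (simp add: center_eq)
  have "(cl_rev ?T \<odot> ?T) {..<n} = 0" using grades_coeff_zero[OF g, of "{..<n}"] n by simp
  moreover have "rev_sign n = (1::'a)" "0 < n" using n by (simp_all add: rev_sign_values)
  then have "(cl_rev ?T \<odot> ?T) {..<n} = 4"
    using scalar_ps_full[of "1 + 4 * ps_sq" 4] by (simp add: cl_rev_scalar_ps scalar_ps_mult)
  ultimately show False by simp
qed

lemma claims_dim_4: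
  assumes n: "n = 4"
  shows "Gamma n eta 1 = Gamma n eta 3 \<and> Gamma n eta 3 = Qset n eta
    \<and> Gamma n eta 2 = Qset' n eta \<and> Qset' n eta = Pset n eta \<and> Qset n eta \<noteq> Pset n eta"
proof -
  have n_pos: "0 < n" and n_le: "n \<le> 4" using n by simp_all
  have sep_odd: "\<forall>k \<in> {1, 3}. \<forall>j \<in> {..n} - {k}.
      rev_sign j \<noteq> (rev_sign k :: 'a) \<or> (-1::'a) ^ j \<noteq> (-1) ^ k \<or> j = 0 \<or> (odd n \<and> j = n)"
    unfolding n by (simp add: rev_sign_values atMost_nat_numeral atMost_Suc insert_Diff_if)
  have sep_even: "\<forall>j \<in> {..n} - {2}. rev_sign j \<noteq> (rev_sign 2 :: 'a) \<or> (-1::'a) ^ j \<noteq> (-1) ^ 2"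
    unfolding n by (simp add: rev_sign_values atMost_nat_numeral atMost_Suc insert_Diff_if)
  have "Gamma n eta k = Qset n eta" if k: "k \<in> {1, 3}" for k
  proof
    show "Gamma n eta k \<subseteq> Qset n eta"
    proof
      fix T assume "T \<in> Gamma n eta k"
      then show "T \<in> Qset n eta" by (rule Gamma_subset_Qset) (use k n in auto)
    qed
    show "Qset n eta \<subseteq> Gamma n eta k" using Qset_subset_Gamma bspec[OF sep_odd k] by blast
  qed
  moreover have "Pset n eta = Qset' n eta" by (rule Pset_eq_Qset'[OF n_pos n_le])
  moreover have "Gamma n eta 2 = Pset n eta"
  proof
    show "Gamma n eta 2 \<subseteq> Pset n eta"
      using Gamma_subset_Pset[of _ 2] n by auto
    show "Pset n eta \<subseteq> Gamma n eta 2"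
      using Pset_subset_Gamma_even_grade[OF _ _ Pset_rev_mult_self_grades_0_n[OF n_pos n_le] sep_even]
      by auto
  qed
  ultimately show ?thesis using Qset_ne_Pset_dim_4[OF n] by simp
qed

lemma claims_dim_5:
  assumes n: "n = 5"
  shows "Gamma n eta 1 = Gamma n eta 2 \<and> Gamma n eta 2 = Gamma n eta 3
    \<and> Gamma n eta 3 = Gamma n eta 4 \<and> Gamma n eta 4 = Qset n eta"
proof -
  have sep: "\<forall>k \<in> {1, 2, 3, 4}. \<forall>j \<in> {..n} - {k}.
      rev_sign j \<noteq> (rev_sign k :: 'a) \<or> (-1::'a) ^ j \<noteq> (-1) ^ k \<or> j = 0 \<or> (odd n \<and> j = n)"
    unfolding n by (simp add: rev_sign_values atMost_nat_numeral atMost_Suc insert_Diff_if)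
  have "Gamma n eta k = Qset n eta" if k: "k \<in> {1, 2, 3, 4}" for k
  proof
    show "Gamma n eta k \<subseteq> Qset n eta"
    proof
      fix T assume "T \<in> Gamma n eta k"
      then show "T \<in> Qset n eta" by (rule Gamma_subset_Qset) (use k n in auto)
    qed
    show "Qset n eta \<subseteq> Gamma n eta k" using Qset_subset_Gamma bspec[OF sep k] by blast
  qed
  then show ?thesis by simp
qed

lemma low_dim_claims_hold: "low_dim_claims n eta"
  unfolding low_dim_claims_def using claims_dim_3 claims_dim_4 claims_dim_5 by blast

end

theorem mainTheorem16:
  shows "(\<forall>p q :: nat. low_dim_claims (p + q) (real_sig p))
       \<and> (\<forall>n :: nat. low_dim_claims n (\<lambda>_. 1 :: complex))"
proof (intro conjI allI)
  fix p q :: nat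
  interpret clifford "p + q" "real_sig p" by unfold_locales (simp add: real_sig_def)
  show "low_dim_claims (p + q) (real_sig p)" by (rule low_dim_claims_hold)
next
  fix n :: nat
  interpret clifford n "\<lambda>_. 1 :: complex" by unfold_locales simp
  show "low_dim_claims n (\<lambda>_. 1 :: complex)" by (rule low_dim_claims_hold)
qed

end
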